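(* Let $\mu$ be a finite or $\sigma$-finite measure, let $C$ be a norm-closed convex bounded subset of $L_1(\mu)$, and let $T:C\to C$ be an affine Lipschitzian mapping. If $S(T)<\frac{2}{t(C)}$, then $T$ has a fixed point.
   Context: $T$ affine means $T(\lambda x+(1-\lambda)y)=\lambda Tx+(1-\lambda)Ty$ for $x,y\in C$, $\lambda\in[0,1]$. For Lipschitzian $T$, $|T|=\sup\{\|Tx-Ty\|/\|x-y\|: x,y\in C, x\ne y\}$ and $S(T)=\liminf_n \frac{|T|+|T^2|+\cdots+|T^n|}{n}$. $t(C)=\inf\{\lambda\ge0:\ \inf_{c\in C}\limsup_n\|c-x_n\|\le\lambda\limsup_n\|x-x_n\|$ for all sequences $(x_n)\subset C$ and $x\in L_1(\mu)$ with $x_n\to x$ $\mu$-a.e.$\}$ (equivalently, with convergence in measure, or local convergence in measure in the $\sigma$-finite case). *)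

theory Defs
  imports "HOL-Analysis.Analysis"
begin

text \<open>Elements of L_1(mu) are represented by integrable real functions; the L_1 norm
is a seminorm on functions, and a subset of L_1(mu) is a set of integrable functions
closed under a.e. equality.\<close>

definition L1norm :: "'a measure \<Rightarrow> ('a \<Rightarrow> real) \<Rightarrow> real" where
  "L1norm M f = (\<integral>x. \<bar>f x\<bar> \<partial>M)"

definition L1_subset :: "'a measure \<Rightarrow> ('a \<Rightarrow> real) set \<Rightarrow> bool" where
  "L1_subset M C \<longleftrightarrow> (\<forall>f\<in>C. integrable M f) \<and>
     (\<forall>f\<in>C. \<forall>g. integrable M g \<longrightarrow> (AE x in M. f x = g x) \<longrightarrow> g \<in> C)"

definition L1_closed :: "'a measure \<Rightarrow> ('a \<Rightarrow> real) set \<Rightarrow> bool" where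
  "L1_closed M C \<longleftrightarrow> (\<forall>xs x. (\<forall>n. xs n \<in> C) \<longrightarrow> integrable M x \<longrightarrow>
     (\<lambda>n. L1norm M (\<lambda>w. xs n w - x w)) \<longlonglongrightarrow> 0 \<longrightarrow> x \<in> C)"

definition L1_convex :: "('a \<Rightarrow> real) set \<Rightarrow> bool" where
  "L1_convex C \<longleftrightarrow> (\<forall>x\<in>C. \<forall>y\<in>C. \<forall>l::real. 0 \<le> l \<and> l \<le> 1 \<longrightarrow>
     (\<lambda>w. l * x w + (1 - l) * y w) \<in> C)"

definition L1_bounded :: "'a measure \<Rightarrow> ('a \<Rightarrow> real) set \<Rightarrow> bool" where
  "L1_bounded M C \<longleftrightarrow> (\<exists>B. \<forall>x\<in>C. L1norm M x \<le> B)"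

definition L1_affine :: "'a measure \<Rightarrow> ('a \<Rightarrow> real) set \<Rightarrow> (('a \<Rightarrow> real) \<Rightarrow> ('a \<Rightarrow> real)) \<Rightarrow> bool" where
  "L1_affine M C T \<longleftrightarrow> (\<forall>x\<in>C. \<forall>y\<in>C. \<forall>l::real. 0 \<le> l \<and> l \<le> 1 \<longrightarrow>
     (AE w in M. T (\<lambda>v. l * x v + (1 - l) * y v) w = l * T x w + (1 - l) * T y w))"

definition L1_lipschitzian :: "'a measure \<Rightarrow> ('a \<Rightarrow> real) set \<Rightarrow> (('a \<Rightarrow> real) \<Rightarrow> ('a \<Rightarrow> real)) \<Rightarrow> bool" where
  "L1_lipschitzian M C T \<longleftrightarrow> (\<exists>L. \<forall>x\<in>C. \<forall>y\<in>C.
     L1norm M (\<lambda>w. T x w - T y w) \<le> L * L1norm M (\<lambda>w. x w - y w))"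

text \<open>Lipschitz constant |T| (pairs with x \<noteq> y in L_1, i.e. nonzero distance).\<close>
definition lip_const :: "'a measure \<Rightarrow> ('a \<Rightarrow> real) set \<Rightarrow> (('a \<Rightarrow> real) \<Rightarrow> ('a \<Rightarrow> real)) \<Rightarrow> real" where
  "lip_const M C T = Sup {L1norm M (\<lambda>w. T x w - T y w) / L1norm M (\<lambda>w. x w - y w) | x y.
      x \<in> C \<and> y \<in> C \<and> L1norm M (\<lambda>w. x w - y w) \<noteq> 0}"

definition S_const :: "'a measure \<Rightarrow> ('a \<Rightarrow> real) set \<Rightarrow> (('a \<Rightarrow> real) \<Rightarrow> ('a \<Rightarrow> real)) \<Rightarrow> ereal" where
  "S_const M C T = liminf (\<lambda>n. ereal ((\<Sum>k=1..n. lip_const M C (T ^^ k)) / real n))"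

definition t_const :: "'a measure \<Rightarrow> ('a \<Rightarrow> real) set \<Rightarrow> ereal" where
  "t_const M C = Inf {ereal l | l. l \<ge> 0 \<and>
     (\<forall>xs x. (\<forall>n. xs n \<in> C) \<longrightarrow> integrable M x \<longrightarrow>
        (AE w in M. (\<lambda>n. xs n w) \<longlonglongrightarrow> x w) \<longrightarrow>
        (INF c\<in>C. limsup (\<lambda>n. ereal (L1norm M (\<lambda>w. c w - xs n w))))
          \<le> ereal l * limsup (\<lambda>n. ereal (L1norm M (\<lambda>w. x w - xs n w)))) }"

end

theory Submission
  imports Defs
begin

text \<open>Call \<open>(x\<^sub>n)\<close> an approximate fixed point sequence with centre \<open>x\<close> and radius \<open>R\<close> if
  \<open>x\<^sub>n \<in> C\<close>, \<open>\<parallel>T x\<^sub>n - x\<^sub>n\<parallel> \<rightarrow> 0\<close>, \<open>x\<^sub>n \<rightarrow> x\<close> a.e. and \<open>\<parallel>x\<^sub>n - x\<parallel> \<rightarrow> R\<close>. By the Brezis--Lieb splitting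
  \<open>\<parallel>x\<^sub>n - c\<parallel> \<rightarrow> \<parallel>x - c\<parallel> + R\<close>, so the definition of \<open>t(C)\<close> provides \<open>c \<in> C\<close> with \<open>\<parallel>x - c\<parallel> + R\<close>
  at most about \<open>t(C) R\<close>, and the Lipschitz constants of the iterates give, for the Cesaro means
  \<open>c\<^sub>m = (T c + \<dots> + T\<^sup>m c) / m\<close>, the bound \<open>\<parallel>x - c\<^sub>m\<parallel> + R \<le> (|T| + \<dots> + |T\<^sup>m|) / m \<cdot> (\<parallel>x - c\<parallel> + R)\<close>.
  Along the \<open>m\<close> realising \<open>S(T)\<close> the \<open>c\<^sub>m\<close> are approximate fixed points within \<open>\<theta> R\<close> of \<open>x\<close>,
  where \<open>\<theta> \<approx> S(T) t(C) / 2 < 1\<close>; a Komlos-type lemma (convex combinations of the tails of a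
  bounded sequence in \<open>L\<^sub>1\<close> converge a.e.) turns them into a new approximate fixed point sequence
  whose centre \<open>x'\<close> and radius \<open>R'\<close> satisfy \<open>\<parallel>x' - x\<parallel> + R' \<le> \<theta> R\<close>. Iterating, the centres
  converge in \<open>L\<^sub>1\<close>, and their limit is a limit of approximate fixed points, hence a fixed point
  because \<open>C\<close> is closed and \<open>T\<close> is Lipschitzian. A vanishing radius gives a fixed point at once.\<close>

lemma abs_le_add_square_div:
  fixes d e :: real
  assumes "0 < e"
  shows "\<bar>d\<bar> \<le> e + d^2 / e"
proof -
  have "0 \<le> (\<bar>d\<bar> - e)^2" by simp
  then have "2 * (e * \<bar>d\<bar>) \<le> e^2 + d^2" by (simp add: power2_diff algebra_simps)
  moreover have "0 \<le> e * \<bar>d\<bar>" using assms by simp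
  ultimately have "e * \<bar>d\<bar> \<le> e^2 + d^2" by linarith
  then have "\<bar>d\<bar> \<le> (e^2 + d^2) / e" using assms by (simp add: pos_le_divide_eq mult.commute)
  then show ?thesis using assms by (simp add: add_divide_distrib power2_eq_square)
qed

lemma exp_half_diff_square:
  fixes a b :: real
  shows "(exp (- (a / 2)) - exp (- (b / 2)))^2 = exp (- a) + exp (- b) - 2 * exp (- ((a + b) / 2))"
proof -
  have "exp (- (a / 2))^2 = exp (- a)" "exp (- (b / 2))^2 = exp (- b)"
    "exp (- (a / 2)) * exp (- (b / 2)) = exp (- ((a + b) / 2))"
    by (simp_all add: power2_eq_square exp_add[symmetric] add_divide_distrib)
  then show ?thesis by (simp add: power2_diff mult.assoc)
qed

lemma Cauchy_of_dominated:
  fixes d :: "nat \<Rightarrow> nat \<Rightarrow> real"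
  assumes d: "\<And>k j. k \<le> j \<Longrightarrow> d k j \<le> \<eta> k" "\<And>k j. d k j = d j k" and \<eta>: "\<eta> \<longlonglongrightarrow> 0" and "0 < e"
  shows "\<exists>N. \<forall>k\<ge>N. \<forall>j\<ge>N. d k j < e"
proof -
  obtain N where N: "\<And>n. n \<ge> N \<Longrightarrow> \<eta> n < e"
    using order_tendstoD(2)[OF \<eta> \<open>0 < e\<close>] by (auto simp: eventually_sequentially)
  have "d k j < e" if "k \<ge> N" "j \<ge> N" for k j
    using d(1)[of k j] d(1)[of j k] d(2)[of k j] N that by (cases "k \<le> j") (auto intro: le_less_trans)
  then show ?thesis by blast
qed

lemma Inf_antimono_sets_tendsto:
  fixes V :: "nat \<Rightarrow> real set"
  assumes "\<And>k. V (Suc k) \<subseteq> V k" "\<And>k. V k \<noteq> {}" "\<And>k. bdd_below (V k)" "\<And>k. Inf (V k) \<le> H"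
  shows "(\<lambda>k. Inf (V k)) \<longlonglongrightarrow> (SUP k. Inf (V k))" "Inf (V k) \<le> (SUP k. Inf (V k))"
proof -
  have "incseq (\<lambda>k. Inf (V k))"
    unfolding incseq_Suc_iff using assms(1-3) by (intro allI cInf_superset_mono)
  moreover have "bdd_above (range (\<lambda>k. Inf (V k)))" using assms(4) by (rule bdd_aboveI2)
  ultimately show "(\<lambda>k. Inf (V k)) \<longlonglongrightarrow> (SUP k. Inf (V k))" "Inf (V k) \<le> (SUP k. Inf (V k))"
    by (auto intro: LIMSEQ_incseq_SUP cSUP_upper)
qed

lemma frequently_less_of_liminf_less:
  fixes u :: "nat \<Rightarrow> 'b::complete_linorder"
  assumes "liminf u < l"
  shows "\<exists>n>k. u n < l"
proof (rule ccontr)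
  assume "\<not> (\<exists>n>k. u n < l)"
  then have "eventually (\<lambda>n. l \<le> u n) sequentially"
    unfolding eventually_sequentially by (metis not_less not_less_eq_eq)
  then have "l \<le> liminf u" by (rule Liminf_bounded)
  with assms show False by simp
qed

lemma convergent_of_convergent_exp:
  fixes u :: "nat \<Rightarrow> real"
  assumes u: "\<And>n. 0 \<le> u n" and cv: "convergent (\<lambda>n. exp (- (u n / 2)))"
    and li: "liminf (\<lambda>n. ennreal (u n)) \<noteq> \<infinity>"
  shows "convergent u"
proof -
  obtain \<gamma> where \<gamma>: "(\<lambda>n. exp (- (u n / 2))) \<longlonglongrightarrow> \<gamma>" using cv by (auto simp: convergent_def)
  obtain b where b: "liminf (\<lambda>n. ennreal (u n)) < ennreal b" "0 \<le> b"
  proof (cases "liminf (\<lambda>n. ennreal (u n))")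
    case (real r)
    then show thesis using that[of "r + 1"] by (simp add: ennreal_less_iff)
  qed (use li in simp)
  \<comment> \<open>the limit \<open>\<gamma>\<close> is positive because \<open>u\<close> is frequently below \<open>b\<close>\<close>
  have "exp (- (b / 2)) \<le> \<gamma>"
  proof (rule ccontr)
    assume "\<not> exp (- (b / 2)) \<le> \<gamma>"
    then obtain N where N: "\<forall>n\<ge>N. b < u n"
      using order_tendstoD(2)[OF \<gamma>, of "exp (- (b / 2))"] by (auto simp: eventually_sequentially)
    obtain n where "n > N" "ennreal (u n) < ennreal b"
      using frequently_less_of_liminf_less[OF b(1)] by blast
    then have "u n < b" using u[of n] by (simp add: ennreal_less_iff)
    then show False using N \<open>n > N\<close> less_imp_le by (metis less_asym)
  qed
  then have "0 < \<gamma>" by (rule less_le_trans[rotated]) simp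
  then have "(\<lambda>n. -2 * ln (exp (- (u n / 2)))) \<longlonglongrightarrow> -2 * ln \<gamma>"
    using \<gamma> by (intro tendsto_intros) auto
  then show ?thesis by (auto simp: convergent_def)
qed

lemma ereal_between_two_div:
  fixes S t :: ereal
  assumes "0 \<le> S" "0 \<le> t" "S < 2 / t"
  obtains s where "0 < s" "S < ereal s" "t < ereal (2 / s)"
proof (cases t)
  case (real t')
  obtain S' where S': "S = ereal S'" "0 \<le> S'" using assms by (cases S) auto
  show ?thesis
  proof (cases "t' = 0")
    case True
    with real S' show ?thesis by (intro that[of "S' + 1"]) auto
  next
    case False
    then have "0 < t'" using real assms(2) by simp
    then have "S' < 2 / t'" using assms(3) real S' by simp
    define s where "s = (S' + 2 / t') / 2"
    have "0 < s" "S' < s" "s < 2 / t'" using \<open>S' < 2 / t'\<close> S'(2) unfolding s_def by auto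
    moreover have "t' < 2 / s"
      using \<open>s < 2 / t'\<close> \<open>0 < t'\<close> \<open>0 < s\<close> by (simp add: field_simps)
    ultimately show ?thesis using real S' by (intro that[of s]) auto
  qed
qed (use assms in auto)

section \<open>The \<open>L\<^sub>1\<close> seminorm\<close>

lemma L1norm_nonneg: "0 \<le> L1norm M f"
  unfolding L1norm_def by (rule integral_nonneg_AE) auto

lemma L1norm_add_le:
  assumes "integrable M f" "integrable M g"
  shows "L1norm M (\<lambda>w. f w + g w) \<le> L1norm M f + L1norm M g"
proof -
  have "L1norm M (\<lambda>w. f w + g w) \<le> (\<integral>w. \<bar>f w\<bar> + \<bar>g w\<bar> \<partial>M)"
    unfolding L1norm_def using assms by (intro integral_mono) auto
  also have "\<dots> = L1norm M f + L1norm M g"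
    unfolding L1norm_def using assms by (intro Bochner_Integration.integral_add integrable_abs)
  finally show ?thesis .
qed

lemma L1norm_mult: "L1norm M (\<lambda>w. c * f w) = \<bar>c\<bar> * L1norm M f"
  unfolding L1norm_def by (simp add: abs_mult)

lemma L1norm_uminus: "L1norm M (\<lambda>w. - f w) = L1norm M f"
  unfolding L1norm_def by simp

lemma L1norm_diff_commute: "L1norm M (\<lambda>w. f w - g w) = L1norm M (\<lambda>w. g w - f w)"
  unfolding L1norm_def by (simp add: abs_minus_commute)

lemma L1norm_triangle:
  assumes "integrable M f" "integrable M g" "integrable M h"
  shows "L1norm M (\<lambda>w. f w - h w) \<le> L1norm M (\<lambda>w. f w - g w) + L1norm M (\<lambda>w. g w - h w)"
  using L1norm_add_le[of M "\<lambda>w. f w - g w" "\<lambda>w. g w - h w"] assms by simp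

lemma L1norm_le_of_abs_le:
  assumes "integrable M f" "integrable M g" "\<And>w. \<bar>g w\<bar> \<le> \<bar>f w\<bar>"
  shows "L1norm M g \<le> L1norm M f"
  unfolding L1norm_def using assms by (intro integral_mono) auto

lemma AE_eq_0_if_L1norm_eq_0:
  assumes "integrable M f" "L1norm M f = 0"
  shows "AE w in M. f w = 0"
  using assms integral_nonneg_eq_0_iff_AE[of M "\<lambda>w. \<bar>f w\<bar>"] unfolding L1norm_def by auto

lemma L1norm_cong_AE:
  assumes "f \<in> borel_measurable M" "g \<in> borel_measurable M" "AE w in M. f w = g w"
  shows "L1norm M f = L1norm M g"
  unfolding L1norm_def using assms by (intro integral_cong_AE) auto

lemma L1norm_sum_le:
  assumes "\<And>m. m \<in> S \<Longrightarrow> integrable M (g m)"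
  shows "L1norm M (\<lambda>w. \<Sum>m\<in>S. g m w) \<le> (\<Sum>m\<in>S. L1norm M (g m))"
  using assms
proof (induction S rule: infinite_finite_induct)
  case (insert x F)
  then have "L1norm M (\<lambda>w. g x w + (\<Sum>m\<in>F. g m w)) \<le> L1norm M (g x) + L1norm M (\<lambda>w. \<Sum>m\<in>F. g m w)"
    by (intro L1norm_add_le) auto
  with insert show ?case by simp
qed (simp_all add: L1norm_def)

lemma L1norm_weighted_sum_le:
  assumes "\<And>m. m \<in> S \<Longrightarrow> integrable M (g m)"
  shows "L1norm M (\<lambda>w. \<Sum>m\<in>S. c m * g m w) \<le> (\<Sum>m\<in>S. \<bar>c m\<bar> * L1norm M (g m))"
  using L1norm_sum_le[of S M "\<lambda>m w. c m * g m w"] assms by (simp add: L1norm_mult)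

lemma integrable_mult_bounded:
  fixes G :: "'a \<Rightarrow> real"
  assumes "integrable M h" "G \<in> borel_measurable M" "\<And>x. \<bar>G x\<bar> \<le> 1"
  shows "integrable M (\<lambda>x. h x * G x)"
proof (rule Bochner_Integration.integrable_bound[OF assms(1)])
  show "AE x in M. norm (h x * G x) \<le> norm (h x)"
    using assms(3) by (intro AE_I2) (simp add: abs_mult mult_left_le)
qed (use assms in auto)

lemma L1norm_nn_integral:
  assumes "integrable M f"
  shows "(\<integral>\<^sup>+w. ennreal \<bar>f w\<bar> \<partial>M) = ennreal (L1norm M f)"
  unfolding L1norm_def using assms by (intro nn_integral_eq_integral) auto

lemma integrable_L1norm_le_of_AE_tendsto:
  assumes f: "\<And>k. integrable M (f k)" and g: "g \<in> borel_measurable M"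
    and lim: "AE w in M. (\<lambda>k. f k w) \<longlonglongrightarrow> g w" and B: "\<And>k. L1norm M (f k) \<le> B"
  shows "integrable M g \<and> L1norm M g \<le> B"
proof -
  have "(\<integral>\<^sup>+w. ennreal \<bar>g w\<bar> \<partial>M) = (\<integral>\<^sup>+w. liminf (\<lambda>k. ennreal \<bar>f k w\<bar>) \<partial>M)"
    using lim by (intro nn_integral_cong_AE, eventually_elim)
      (rule lim_imp_Liminf[symmetric], auto intro: tendsto_rabs)
  also have "\<dots> \<le> liminf (\<lambda>k. \<integral>\<^sup>+w. ennreal \<bar>f k w\<bar> \<partial>M)"
    using f by (intro nn_integral_liminf) auto
  also have "\<dots> \<le> liminf (\<lambda>k. ennreal B)"
    using B f by (intro Liminf_mono always_eventually) (simp add: L1norm_nn_integral ennreal_leI)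
  also have "\<dots> = ennreal B" by (simp add: Liminf_const)
  finally have nn: "(\<integral>\<^sup>+w. ennreal \<bar>g w\<bar> \<partial>M) \<le> ennreal B" .
  then have ig: "integrable M g"
    using g by (intro integrableI_bounded) (auto simp: top.not_eq_extremum intro: le_less_trans)
  moreover have "0 \<le> B" using B[of 0] L1norm_nonneg[of M "f 0"] by simp
  ultimately show ?thesis using nn by (simp add: L1norm_nn_integral)
qed

lemma L1norm_Brezis_Lieb:
  assumes f: "\<And>n. integrable M (f n)" and f0: "integrable M f0"
    and lim: "AE w in M. (\<lambda>n. f n w) \<longlonglongrightarrow> f0 w" and g: "integrable M g"
  shows "(\<lambda>n. L1norm M (\<lambda>w. g w + (f n w - f0 w)) - L1norm M (\<lambda>w. f n w - f0 w)) \<longlonglongrightarrow> L1norm M g"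
proof -
  have eq: "L1norm M (\<lambda>w. g w + (f n w - f0 w)) - L1norm M (\<lambda>w. f n w - f0 w)
      = (\<integral>w. \<bar>g w + (f n w - f0 w)\<bar> - \<bar>f n w - f0 w\<bar> \<partial>M)" for n
    unfolding L1norm_def using f f0 g by (intro Bochner_Integration.integral_diff[symmetric]) auto
  have "(\<lambda>n. \<integral>w. \<bar>g w + (f n w - f0 w)\<bar> - \<bar>f n w - f0 w\<bar> \<partial>M) \<longlonglongrightarrow> (\<integral>w. \<bar>g w\<bar> \<partial>M)"
  proof (rule integral_dominated_convergence[where w="\<lambda>w. \<bar>g w\<bar>"])
    show "AE w in M. (\<lambda>n. \<bar>g w + (f n w - f0 w)\<bar> - \<bar>f n w - f0 w\<bar>) \<longlonglongrightarrow> \<bar>g w\<bar>"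
      using lim
    proof eventually_elim
      case (elim w)
      then have "(\<lambda>n. f n w - f0 w) \<longlonglongrightarrow> 0" by (simp add: LIM_zero)
      then have "(\<lambda>n. \<bar>g w + (f n w - f0 w)\<bar> - \<bar>f n w - f0 w\<bar>) \<longlonglongrightarrow> \<bar>g w + 0\<bar> - \<bar>0\<bar>"
        by (intro tendsto_intros)
      then show ?case by simp
    qed
  qed (use f f0 g in auto)
  then show ?thesis by (simp only: eq L1norm_def[of M g])
qed

lemma L1_Cauchy_AE_limit:
  fixes X :: "nat \<Rightarrow> 'a \<Rightarrow> real"
  assumes X: "\<And>k. integrable M (X k)" and b: "b \<longlonglongrightarrow> 0"
    and cau: "\<And>k j. k \<le> j \<Longrightarrow> L1norm M (\<lambda>w. X j w - X k w) \<le> b k"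
  obtains z where "integrable M z" "\<And>k. L1norm M (\<lambda>w. z w - X k w) \<le> b k"
proof -
  have d_le: "L1norm M (\<lambda>w. X i w - X j w) \<le> b i" if "i \<le> j" for i j
    using cau[OF that] L1norm_diff_commute[of M "X i" "X j"] by simp
  have d_sym: "L1norm M (\<lambda>w. X i w - X j w) = L1norm M (\<lambda>w. X j w - X i w)" for i j
    by (rule L1norm_diff_commute)
  have "\<exists>N. \<forall>i\<ge>N. \<forall>j\<ge>N. (\<integral>w. norm (X i w - X j w) \<partial>M) < e" if "e > 0" for e
    using Cauchy_of_dominated[where d="\<lambda>i j. L1norm M (\<lambda>w. X i w - X j w)", OF d_le d_sym b that]
    unfolding L1norm_def real_norm_def .
  then obtain r where r: "strict_mono r" "AE w in M. Cauchy (\<lambda>i. X (r i) w)"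
    using cauchy_L1_AE_cauchy_subseq[where s=X, OF X] by blast
  define z where "z w = lim (\<lambda>i. X (r i) w)" for w
  have z_meas: "z \<in> borel_measurable M" unfolding z_def using X by measurable
  have z_lim: "AE w in M. (\<lambda>i. X (r i) w) \<longlonglongrightarrow> z w"
    using r(2) by eventually_elim (simp add: z_def Cauchy_convergent_iff convergent_LIMSEQ_iff)
  have diff: "integrable M (\<lambda>w. z w - X k w) \<and> L1norm M (\<lambda>w. z w - X k w) \<le> b k" for k
  proof (rule integrable_L1norm_le_of_AE_tendsto[where f="\<lambda>i w. X (r (i + k)) w - X k w"])
    show "AE w in M. (\<lambda>i. X (r (i + k)) w - X k w) \<longlonglongrightarrow> z w - X k w"
      using z_lim by eventually_elim (auto intro: tendsto_diff LIMSEQ_ignore_initial_segment)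
    show "L1norm M (\<lambda>w. X (r (i + k)) w - X k w) \<le> b k" for i
      using seq_suble[OF r(1), of "i + k"] by (intro cau) simp
  qed (use X z_meas in auto)
  have "integrable M (\<lambda>w. (z w - X 0 w) + X 0 w)"
    using diff[of 0] X by (intro Bochner_Integration.integrable_add) auto
  then show ?thesis using diff that by simp
qed

lemma L1norm_diff_le_geometric:
  assumes X: "\<And>k. integrable M (X k)" and \<theta>: "0 \<le> \<theta>" "\<theta> < 1"
    and step: "\<And>k. L1norm M (\<lambda>w. X (Suc k) w - X k w) \<le> c * \<theta>^k"
    and "k \<le> j"
  shows "L1norm M (\<lambda>w. X j w - X k w) \<le> c * \<theta>^k / (1 - \<theta>)"
proof -
  have partial: "L1norm M (\<lambda>w. X (k + d) w - X k w) \<le> c * (\<theta>^k - \<theta>^(k + d)) / (1 - \<theta>)" for d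
  proof (induction d)
    case 0
    then show ?case by (simp add: L1norm_def)
  next
    case (Suc d)
    have "L1norm M (\<lambda>w. X (k + Suc d) w - X k w)
        \<le> L1norm M (\<lambda>w. X (Suc (k + d)) w - X (k + d) w) + L1norm M (\<lambda>w. X (k + d) w - X k w)"
      using X by (simp add: L1norm_triangle)
    also have "\<dots> \<le> c * \<theta>^(k + d) + c * (\<theta>^k - \<theta>^(k + d)) / (1 - \<theta>)"
      using step Suc by (intro add_mono) auto
    also have "\<dots> = c * (\<theta>^k - \<theta>^(k + Suc d)) / (1 - \<theta>)"
      using \<theta> by (simp add: field_simps)
    finally show ?case .
  qed
  obtain d where j: "j = k + d" using \<open>k \<le> j\<close> le_Suc_ex by blast
  have "0 \<le> c" using step[of 0] L1norm_nonneg[of M "\<lambda>w. X (Suc 0) w - X 0 w"] by simp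
  have "L1norm M (\<lambda>w. X j w - X k w) \<le> c * (\<theta>^k - \<theta>^j) / (1 - \<theta>)"
    unfolding j by (rule partial)
  also have "\<dots> \<le> c * \<theta>^k / (1 - \<theta>)"
    using \<theta> \<open>0 \<le> c\<close> by (intro divide_right_mono mult_left_mono) auto
  finally show ?thesis .
qed

section \<open>Convex combinations of tails\<close>

definition tail_weights :: "nat \<Rightarrow> (nat \<Rightarrow> real) \<Rightarrow> nat \<Rightarrow> bool" where
  "tail_weights k lam N \<longleftrightarrow> (\<forall>m. 0 \<le> lam m) \<and> (\<forall>m. m < k \<or> N \<le> m \<longrightarrow> lam m = 0) \<and> (\<Sum>m<N. lam m) = 1"

definition convex_comb :: "(nat \<Rightarrow> 'a \<Rightarrow> real) \<Rightarrow> (nat \<Rightarrow> real) \<Rightarrow> nat \<Rightarrow> 'a \<Rightarrow> real" where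
  "convex_comb u lam N = (\<lambda>w. \<Sum>m<N. lam m * u m w)"

lemma tail_weights_mono: "tail_weights k lam N \<Longrightarrow> j \<le> k \<Longrightarrow> tail_weights j lam N"
  unfolding tail_weights_def by auto

lemma tail_weights_sum_extend:
  assumes "tail_weights k lam N" "N \<le> N'"
  shows "(\<Sum>m<N'. lam m * F m) = (\<Sum>m<N. lam m * F m)"
  using assms unfolding tail_weights_def by (intro sum.mono_neutral_right) auto

lemma sum_mean_weights:
  assumes "tail_weights k l1 N1" "tail_weights k' l2 N2"
  shows "(\<Sum>m<max N1 N2. (l1 m + l2 m) / 2 * F m) = ((\<Sum>m<N1. l1 m * F m) + (\<Sum>m<N2. l2 m * F m)) / 2"
proof -
  have "(\<Sum>m<max N1 N2. (l1 m + l2 m) / 2 * F m) = (\<Sum>m<max N1 N2. (l1 m * F m + l2 m * F m) / 2)"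
    by (intro sum.cong) (auto simp: field_simps)
  also have "\<dots> = ((\<Sum>m<max N1 N2. l1 m * F m) + (\<Sum>m<max N1 N2. l2 m * F m)) / 2"
    by (simp only: sum_divide_distrib[symmetric] sum.distrib)
  also have "\<dots> = ((\<Sum>m<N1. l1 m * F m) + (\<Sum>m<N2. l2 m * F m)) / 2"
    using tail_weights_sum_extend[OF assms(1), of "max N1 N2"] tail_weights_sum_extend[OF assms(2), of "max N1 N2"]
    by simp
  finally show ?thesis .
qed

lemma tail_weights_mean:
  assumes "tail_weights k l1 N1" "tail_weights k l2 N2"
  shows "tail_weights k (\<lambda>m. (l1 m + l2 m) / 2) (max N1 N2)"
  using assms sum_mean_weights[OF assms, of "\<lambda>_. 1"] unfolding tail_weights_def by auto

lemma tail_weights_unit: "tail_weights k (\<lambda>m. if m = k then 1 else 0) (Suc k)"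
  unfolding tail_weights_def by auto

lemma partial_weight_bounds:
  fixes lam :: "nat \<Rightarrow> real"
  assumes "\<forall>m. 0 \<le> lam m" "(\<Sum>m<Suc N. lam m) = 1"
  shows "0 \<le> (\<Sum>m<N. lam m) \<and> (\<Sum>m<N. lam m) \<le> 1"
proof -
  have "0 \<le> lam N" "0 \<le> (\<Sum>m<N. lam m)" using assms(1) by (auto intro!: sum_nonneg)
  then show ?thesis using assms(2) by simp
qed

lemma convex_comb_Suc:
  assumes "(\<Sum>m<Suc N. lam m) = 1" and s: "s = (\<Sum>m<N. lam m)" "s \<noteq> 0"
  shows "convex_comb u lam (Suc N) = (\<lambda>w. s * convex_comb u (\<lambda>m. lam m / s) N w + (1 - s) * u N w)"
proof -
  have "lam N = 1 - s" using assms by simp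
  then show ?thesis using s by (auto simp: convex_comb_def fun_eq_iff sum_distrib_left)
qed

lemma convex_comb_Suc_degenerate:
  assumes "\<forall>m. 0 \<le> lam m" "(\<Sum>m<Suc N. lam m) = 1" "(\<Sum>m<N. lam m) = 0"
  shows "convex_comb u lam (Suc N) = u N"
proof -
  have "\<forall>m<N. lam m = 0" using assms(1,3) by (subst (asm) sum_nonneg_eq_0_iff) auto
  moreover have "lam N = 1" using assms(2,3) by simp
  ultimately show ?thesis by (simp add: convex_comb_def fun_eq_iff)
qed

lemma convex_comb_mem:
  assumes C: "L1_convex C" and u: "\<And>m. u m \<in> C"
  shows "\<forall>m. 0 \<le> lam m \<Longrightarrow> (\<Sum>m<N. lam m) = 1 \<Longrightarrow> convex_comb u lam N \<in> C"
proof (induction N arbitrary: lam)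
  case (Suc N)
  define s where "s = (\<Sum>m<N. lam m)"
  have "0 \<le> s" "s \<le> 1" using partial_weight_bounds[OF Suc.prems] unfolding s_def by auto
  show ?case
  proof (cases "s = 0")
    case True
    then show ?thesis using Suc.prems u by (simp add: convex_comb_Suc_degenerate s_def)
  next
    case False
    then have "convex_comb u (\<lambda>m. lam m / s) N \<in> C"
      using Suc \<open>0 \<le> s\<close> by (intro Suc.IH) (auto simp: s_def sum_divide_distrib[symmetric])
    then show ?thesis
      using C u \<open>0 \<le> s\<close> \<open>s \<le> 1\<close> False Suc.prems
      unfolding L1_convex_def convex_comb_Suc[OF Suc.prems(2) s_def False] by blast
  qed
qed simp

lemma affine_convex_comb_AE:
  assumes C: "L1_convex C" and T: "L1_affine M C T" and u: "\<And>m. u m \<in> C"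
  shows "\<forall>m. 0 \<le> lam m \<Longrightarrow> (\<Sum>m<N. lam m) = 1 \<Longrightarrow>
    AE w in M. T (convex_comb u lam N) w = convex_comb (\<lambda>m. T (u m)) lam N w"
proof (induction N arbitrary: lam)
  case (Suc N)
  define s where "s = (\<Sum>m<N. lam m)"
  have "0 \<le> s" "s \<le> 1" using partial_weight_bounds[OF Suc.prems] unfolding s_def by auto
  show ?case
  proof (cases "s = 0")
    case True
    then show ?thesis using Suc.prems by (simp add: convex_comb_Suc_degenerate s_def)
  next
    case False
    let ?lam = "\<lambda>m. lam m / s"
    have lam: "\<forall>m. 0 \<le> ?lam m" "(\<Sum>m<N. ?lam m) = 1"
      using Suc.prems \<open>0 \<le> s\<close> False by (auto simp: s_def sum_divide_distrib[symmetric])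
    have "AE w in M. T (\<lambda>w. s * convex_comb u ?lam N w + (1 - s) * u N w) w
        = s * T (convex_comb u ?lam N) w + (1 - s) * T (u N) w"
      using T convex_comb_mem[where u=u, OF C u lam] u \<open>0 \<le> s\<close> \<open>s \<le> 1\<close> unfolding L1_affine_def by blast
    with Suc.IH[OF lam] show ?thesis
      unfolding convex_comb_Suc[OF Suc.prems(2) s_def False] by eventually_elim simp
  qed
qed simp

lemma convex_comb_nonneg:
  assumes "\<And>m w. 0 \<le> u m w" "\<forall>m. 0 \<le> lam m"
  shows "0 \<le> convex_comb u lam N w"
  unfolding convex_comb_def using assms by (auto intro!: sum_nonneg)

lemma convex_comb_measurable:
  "(\<And>m. u m \<in> borel_measurable M) \<Longrightarrow> convex_comb u lam N \<in> borel_measurable M"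
  unfolding convex_comb_def by measurable

lemma convex_comb_diff:
  "convex_comb (\<lambda>m w. u m w - v m w) lam N w = convex_comb u lam N w - convex_comb v lam N w"
  by (simp add: convex_comb_def sum_subtractf right_diff_distrib)

lemma tail_weights_sum_le:
  assumes lam: "tail_weights k lam N" and a: "\<And>m. k \<le> m \<Longrightarrow> a m \<le> c"
  shows "(\<Sum>m<N. lam m * a m) \<le> c"
proof -
  have "(\<Sum>m<N. lam m * a m) \<le> (\<Sum>m<N. lam m * c)"
  proof (rule sum_mono)
    fix m
    show "lam m * a m \<le> lam m * c"
      using lam a[of m] unfolding tail_weights_def by (cases "m < k") (auto intro: mult_left_mono)
  qed
  also have "\<dots> = c" using lam unfolding tail_weights_def by (simp add: sum_distrib_right[symmetric])
  finally show ?thesis .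
qed

lemma L1norm_convex_comb_diff_le:
  assumes "\<And>m. integrable M (u m)" "integrable M y" "\<forall>m. 0 \<le> lam m" "(\<Sum>m<N. lam m) = 1"
  shows "L1norm M (\<lambda>w. convex_comb u lam N w - y w) \<le> (\<Sum>m<N. lam m * L1norm M (\<lambda>w. u m w - y w))"
proof -
  have "(\<lambda>w. convex_comb u lam N w - y w) = (\<lambda>w. \<Sum>m<N. lam m * (u m w - y w))"
    using assms(4) by (auto simp: fun_eq_iff convex_comb_def sum_subtractf right_diff_distrib
        sum_distrib_right[symmetric])
  then have "L1norm M (\<lambda>w. convex_comb u lam N w - y w)
      \<le> (\<Sum>m<N. \<bar>lam m\<bar> * L1norm M (\<lambda>w. u m w - y w))"
    using assms L1norm_weighted_sum_le[of "{..<N}" M "\<lambda>m w. u m w - y w" lam] by simp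
  then show ?thesis using assms(3) by simp
qed

lemma L1norm_convex_comb_le:
  assumes "\<And>m. integrable M (u m)" "\<And>m. L1norm M (u m) \<le> B" "\<forall>m. 0 \<le> lam m" "(\<Sum>m<N. lam m) = 1"
  shows "L1norm M (convex_comb u lam N) \<le> B"
proof -
  have "L1norm M (\<lambda>w. convex_comb u lam N w - 0) \<le> (\<Sum>m<N. lam m * L1norm M (\<lambda>w. u m w - 0))"
    using assms by (intro L1norm_convex_comb_diff_le) auto
  also have "\<dots> \<le> (\<Sum>m<N. lam m * B)" using assms by (auto intro!: sum_mono mult_left_mono)
  finally show ?thesis using assms(4) by (simp add: sum_distrib_right[symmetric])
qed

lemma tail_convex_comb_tendsto:
  fixes v :: "nat \<Rightarrow> real"
  assumes v: "v \<longlonglongrightarrow> l" and mu: "\<And>k. tail_weights k (mu k) (K k)"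
  shows "(\<lambda>k. \<Sum>m<K k. mu k m * v m) \<longlonglongrightarrow> l"
proof (rule LIMSEQ_I)
  fix r :: real assume "0 < r"
  then obtain N where N: "\<And>m. m \<ge> N \<Longrightarrow> \<bar>v m - l\<bar> < r / 2"
    using LIMSEQ_D[OF v, of "r / 2"] by auto
  have "norm ((\<Sum>m<K k. mu k m * v m) - l) < r" if "k \<ge> N" for k
  proof -
    have "(\<Sum>m<K k. mu k m * v m) - l = (\<Sum>m<K k. mu k m * (v m - l))"
      using mu[of k] by (simp add: tail_weights_def right_diff_distrib sum_subtractf sum_distrib_right[symmetric])
    also have "\<bar>\<dots>\<bar> \<le> (\<Sum>m<K k. mu k m * \<bar>v m - l\<bar>)"
      using mu[of k] by (intro order_trans[OF sum_abs]) (simp add: tail_weights_def abs_mult)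
    also have "\<dots> \<le> r / 2"
      using N that by (intro tail_weights_sum_le[OF mu]) (simp add: less_imp_le)
    finally show ?thesis using \<open>0 < r\<close> by simp
  qed
  then show "\<exists>N. \<forall>k\<ge>N. norm ((\<Sum>m<K k. mu k m * v m) - l) < r" by blast
qed

lemma tail_weights_compose:
  assumes lam: "\<And>i. tail_weights i (lam i) (N i)" and mu: "tail_weights k mu K"
  shows "tail_weights k (\<lambda>m. \<Sum>i<K. mu i * lam i m) (\<Sum>i<K. N i)"
proof -
  have N_le: "N i \<le> (\<Sum>i<K. N i)" if "i < K" for i
    using that by (intro member_le_sum) auto
  have "(\<Sum>m<(\<Sum>i<K. N i). \<Sum>i<K. mu i * lam i m) = (\<Sum>i<K. mu i * (\<Sum>m<(\<Sum>i<K. N i). lam i m * 1))"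
    by (simp add: sum.swap[of _ "{..<K}"] sum_distrib_left)
  also have "\<dots> = (\<Sum>i<K. mu i)"
    using tail_weights_sum_extend[OF lam N_le, of _ "\<lambda>_. 1"] lam by (intro sum.cong) (auto simp: tail_weights_def)
  moreover have "(\<Sum>i<K. mu i * lam i m) = 0" if "m < k \<or> (\<Sum>i<K. N i) \<le> m" for m
  proof (intro sum.neutral ballI)
    fix i assume "i \<in> {..<K}"
    show "mu i * lam i m = 0"
    proof (cases "i < k")
      case True
      then show ?thesis using mu by (simp add: tail_weights_def)
    next
      case False
      then show ?thesis
        using that lam[of i] N_le[of i] \<open>i \<in> {..<K}\<close> by (auto simp: tail_weights_def)
    qed
  qed
  moreover have "0 \<le> (\<Sum>i<K. mu i * lam i m)" for m
    using lam mu by (auto simp: tail_weights_def intro!: sum_nonneg)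
  moreover have "(\<Sum>i<K. mu i) = 1" using mu by (simp add: tail_weights_def)
  ultimately show ?thesis unfolding tail_weights_def by auto
qed

lemma convex_comb_compose:
  assumes lam: "\<And>i. tail_weights i (lam i) (N i)"
  shows "convex_comb (\<lambda>i. convex_comb u (lam i) (N i)) mu K = convex_comb u (\<lambda>m. \<Sum>i<K. mu i * lam i m) (\<Sum>i<K. N i)"
proof
  fix w
  have N_le: "N i \<le> (\<Sum>i<K. N i)" if "i < K" for i
    using that by (intro member_le_sum) auto
  have "convex_comb (\<lambda>i. convex_comb u (lam i) (N i)) mu K w
      = (\<Sum>i<K. mu i * (\<Sum>m<(\<Sum>i<K. N i). lam i m * u m w))"
    unfolding convex_comb_def using tail_weights_sum_extend[OF lam N_le] by (intro sum.cong) auto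
  also have "\<dots> = convex_comb u (\<lambda>m. \<Sum>i<K. mu i * lam i m) (\<Sum>i<K. N i) w"
    unfolding convex_comb_def by (simp add: sum.swap[of _ "{..<K}"] sum_distrib_left sum_distrib_right mult.assoc)
  finally show "convex_comb (\<lambda>i. convex_comb u (lam i) (N i)) mu K w
      = convex_comb u (\<lambda>m. \<Sum>i<K. mu i * lam i m) (\<Sum>i<K. N i) w" .
qed

definition cesaro_weights :: "nat \<Rightarrow> nat \<Rightarrow> real" where
  "cesaro_weights m j = (if 1 \<le> j then 1 / real m else 0)"

lemma cesaro_weights_nonneg: "\<forall>j. 0 \<le> cesaro_weights m j"
  by (simp add: cesaro_weights_def)

lemma sum_cesaro_weights: "(\<Sum>j<Suc m. cesaro_weights m j * a j) = (\<Sum>j=1..m. a j) / real m"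
proof -
  have "(\<Sum>j<Suc m. cesaro_weights m j * a j) = (\<Sum>j<Suc m. (if 1 \<le> j then a j else 0)) / real m"
    unfolding sum_divide_distrib by (intro sum.cong) (auto simp: cesaro_weights_def)
  also have "(\<Sum>j<Suc m. (if 1 \<le> j then a j else 0)) = (\<Sum>j=1..m. a j)"
    by (induction m) auto
  finally show ?thesis .
qed

lemma cesaro_weights_sum: "1 \<le> m \<Longrightarrow> (\<Sum>j<Suc m. cesaro_weights m j) = 1"
  using sum_cesaro_weights[of m "\<lambda>_. 1"] by simp

section \<open>A Komlos-type lemma\<close>

lemma weighted_L1_Cauchy_of_weighted_L2_Cauchy:
  fixes G :: "nat \<Rightarrow> 'a \<Rightarrow> real"
  assumes h: "h \<in> borel_measurable M" "\<And>x. 0 < h x" "integrable M h"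
    and G: "\<And>k. G k \<in> borel_measurable M" "\<And>k x. \<bar>G k x\<bar> \<le> 1"
    and cau: "\<And>e. e > 0 \<Longrightarrow> \<exists>N. \<forall>k\<ge>N. \<forall>j\<ge>N. (\<integral>x. h x * (G k x - G j x)^2 \<partial>M) < e"
    and e: "e > 0"
  shows "\<exists>N. \<forall>i\<ge>N. \<forall>j\<ge>N. (\<integral>x. norm (h x * G i x - h x * G j x) \<partial>M) < e"
proof -
  have sq_int: "integrable M (\<lambda>x. h x * (G i x - G j x)^2)" for i j
  proof (rule Bochner_Integration.integrable_bound[of _ "\<lambda>x. 4 * h x"])
    have "(G i x - G j x)^2 \<le> 2^2" for x
      using G(2)[of i x] G(2)[of j x] by (intro power2_le_iff_abs_le[THEN iffD2]) auto
    then show "AE x in M. norm (h x * (G i x - G j x)^2) \<le> norm (4 * h x)"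
      using h(2) by (intro AE_I2) (simp add: abs_mult less_imp_le mult.commute)
  qed (use h G in auto)
  define H where "H = (\<integral>x. h x \<partial>M)"
  have "0 \<le> H" unfolding H_def using h(2) by (intro integral_nonneg_AE) (auto intro: less_imp_le)
  define d where "d = e / (2 * (H + 1))"
  have d: "d > 0" "d * H \<le> e / 2"
    using e \<open>0 \<le> H\<close> by (auto simp: d_def field_simps)
  obtain N where N: "\<forall>k\<ge>N. \<forall>j\<ge>N. (\<integral>x. h x * (G k x - G j x)^2 \<partial>M) < d * e / 2"
    using cau[of "d * e / 2"] d e by auto
  have "(\<integral>x. norm (h x * G i x - h x * G j x) \<partial>M) < e" if "i \<ge> N" "j \<ge> N" for i j
  proof -
    have "(\<integral>x. norm (h x * G i x - h x * G j x) \<partial>M)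
        \<le> (\<integral>x. d * h x + h x * (G i x - G j x)^2 / d \<partial>M)"
    proof (rule integral_mono)
      fix x
      have "norm (h x * G i x - h x * G j x) = h x * \<bar>G i x - G j x\<bar>"
        using h(2)[of x] by (simp add: abs_mult right_diff_distrib[symmetric])
      also have "\<dots> \<le> h x * (d + (G i x - G j x)^2 / d)"
        using h(2)[of x] abs_le_add_square_div[OF d(1)] by (intro mult_left_mono) auto
      finally show "norm (h x * G i x - h x * G j x) \<le> d * h x + h x * (G i x - G j x)^2 / d"
        by (simp add: algebra_simps)
    qed (use h G sq_int integrable_mult_bounded[OF h(3) G] in auto)
    also have "\<dots> = d * H + (\<integral>x. h x * (G i x - G j x)^2 \<partial>M) / d"
      unfolding H_def using h sq_int by simp
    also have "\<dots> < d * H + (d * e / 2) / d"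
      using N that d by (intro add_strict_left_mono divide_strict_right_mono) auto
    also have "\<dots> \<le> e" using d by simp
    finally show ?thesis .
  qed
  then show ?thesis by blast
qed

lemma AE_convergent_subseq_of_weighted_L2_Cauchy:
  fixes G :: "nat \<Rightarrow> 'a \<Rightarrow> real"
  assumes h: "h \<in> borel_measurable M" "\<And>x. 0 < h x" "integrable M h"
    and G: "\<And>k. G k \<in> borel_measurable M" "\<And>k x. \<bar>G k x\<bar> \<le> 1"
    and cau: "\<And>e. e > 0 \<Longrightarrow> \<exists>N. \<forall>k\<ge>N. \<forall>j\<ge>N. (\<integral>x. h x * (G k x - G j x)^2 \<partial>M) < e"
  obtains r where "strict_mono r" "AE x in M. convergent (\<lambda>n. G (r n) x)"
proof -
  obtain r where r: "strict_mono r" "AE x in M. Cauchy (\<lambda>i. h x * G (r i) x)"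
    by (rule cauchy_L1_AE_cauchy_subseq[of M "\<lambda>k x. h x * G k x"])
      (use integrable_mult_bounded[OF h(3) G] weighted_L1_Cauchy_of_weighted_L2_Cauchy[OF h G cau] in auto)
  have "AE x in M. convergent (\<lambda>i. G (r i) x)"
    using r(2)
  proof eventually_elim
    case (elim x)
    then have "convergent (\<lambda>i. h x * G (r i) x)" using Cauchy_convergent_iff by blast
    then show ?case using h(2)[of x] convergent_mult_const_iff[of "h x" "\<lambda>i. G (r i) x"] by simp
  qed
  with r(1) show ?thesis by (rule that)
qed

definition exp_energy :: "'a measure \<Rightarrow> ('a \<Rightarrow> real) \<Rightarrow> (nat \<Rightarrow> 'a \<Rightarrow> real) \<Rightarrow> (nat \<Rightarrow> real) \<Rightarrow> nat \<Rightarrow> real"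
  where "exp_energy M h p lam N = (\<integral>w. h w * exp (- convex_comb p lam N w) \<partial>M)"

context
  fixes M :: "'a measure" and h :: "'a \<Rightarrow> real" and p :: "nat \<Rightarrow> 'a \<Rightarrow> real"
  assumes p: "\<And>k. p k \<in> borel_measurable M" "\<And>k w. 0 \<le> p k w"
    and h: "h \<in> borel_measurable M" "\<And>w. 0 < h w" "integrable M h"
begin

lemma integrable_exp_energy:
  assumes "tail_weights k lam N"
  shows "integrable M (\<lambda>w. h w * exp (- convex_comb p lam N w))"
proof (rule integrable_mult_bounded[OF h(3)])
  have [measurable]: "convex_comb p lam N \<in> borel_measurable M" by (rule convex_comb_measurable) (rule p(1))
  then show "(\<lambda>w. exp (- convex_comb p lam N w)) \<in> borel_measurable M" by measurable
  have "0 \<le> convex_comb p lam N w" for w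
    using convex_comb_nonneg[where u=p, OF p(2)] assms unfolding tail_weights_def by blast
  then show "\<bar>exp (- convex_comb p lam N w)\<bar> \<le> 1" for w by simp
qed

lemma exp_energy_bounds:
  assumes "tail_weights k lam N"
  shows "0 \<le> exp_energy M h p lam N \<and> exp_energy M h p lam N \<le> (\<integral>w. h w \<partial>M)"
proof -
  have "0 \<le> convex_comb p lam N w" for w
    using convex_comb_nonneg[where u=p, OF p(2)] assms unfolding tail_weights_def by blast
  then show ?thesis
    unfolding exp_energy_def using integrable_exp_energy[OF assms] h
    by (auto simp: less_imp_le intro!: integral_nonneg_AE integral_mono mult_left_le)
qed

lemma exp_energy_mean:
  assumes l1: "tail_weights k l1 N1" and l2: "tail_weights k l2 N2"
  shows "(\<integral>w. h w * (exp (- (convex_comb p l1 N1 w / 2)) - exp (- (convex_comb p l2 N2 w / 2)))^2 \<partial>M)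
    = exp_energy M h p l1 N1 + exp_energy M h p l2 N2
      - 2 * exp_energy M h p (\<lambda>m. (l1 m + l2 m) / 2) (max N1 N2)"
proof -
  have "convex_comb p (\<lambda>m. (l1 m + l2 m) / 2) (max N1 N2) w
      = (convex_comb p l1 N1 w + convex_comb p l2 N2 w) / 2" for w
    unfolding convex_comb_def by (rule sum_mean_weights[OF l1 l2])
  then have "h w * (exp (- (convex_comb p l1 N1 w / 2)) - exp (- (convex_comb p l2 N2 w / 2)))^2
      = h w * exp (- convex_comb p l1 N1 w) + h w * exp (- convex_comb p l2 N2 w)
        - 2 * (h w * exp (- convex_comb p (\<lambda>m. (l1 m + l2 m) / 2) (max N1 N2) w))" for w
    unfolding exp_half_diff_square by (simp add: algebra_simps)
  then show ?thesis
    unfolding exp_energy_def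
    using integrable_exp_energy[OF l1] integrable_exp_energy[OF l2] integrable_exp_energy[OF tail_weights_mean[OF l1 l2]]
    by simp
qed

text \<open>Minimising the energy over convex combinations of the tails of \<open>p\<close>: since the energy is
  convex, near-minimisers are close to their midpoints and hence to each other, which makes the
  functions \<open>exp (- P / 2)\<close> Cauchy in \<open>L\<^sub>2(h \<mu>)\<close>.\<close>

lemma tail_weights_exp_Cauchy:
  obtains L NN where "\<And>k. tail_weights k (L k) (NN k)"
    "\<And>e. e > 0 \<Longrightarrow> \<exists>N. \<forall>k\<ge>N. \<forall>j\<ge>N. (\<integral>w. h w * (exp (- (convex_comb p (L k) (NN k) w / 2))
        - exp (- (convex_comb p (L j) (NN j) w / 2)))^2 \<partial>M) < e"
proof -
  define V where "V k = {exp_energy M h p lam N | lam N. tail_weights k lam N}" for k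
  define a where "a k = Inf (V k)" for k
  have ne: "V k \<noteq> {}" for k unfolding V_def using tail_weights_unit by blast
  have bdd: "bdd_below (V k)" for k
    by (rule bdd_belowI[of _ 0]) (auto simp: V_def dest: exp_energy_bounds)
  have a_le: "a k \<le> exp_energy M h p lam N" if "tail_weights k lam N" for k lam N
  proof -
    have "exp_energy M h p lam N \<in> V k" using that unfolding V_def by blast
    then show ?thesis unfolding a_def by (rule cInf_lower[OF _ bdd])
  qed
  have "V (Suc k) \<subseteq> V k" for k unfolding V_def using tail_weights_mono[of "Suc k" _ _ k] by auto
  moreover have "Inf (V k) \<le> (\<integral>w. h w \<partial>M)" for k
    using a_le[OF tail_weights_unit[of k]] exp_energy_bounds[OF tail_weights_unit[of k]] unfolding a_def
    by linarith
  note Inf_lim = Inf_antimono_sets_tendsto[where V=V, OF calculation(1) ne bdd this]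
  have a_lim: "a \<longlonglongrightarrow> (SUP k. a k)" and a_le_sup: "\<And>k. a k \<le> (SUP k. a k)"
    unfolding a_def using Inf_lim by simp_all
  have "\<exists>lam N. tail_weights k lam N \<and> exp_energy M h p lam N < a k + 1 / Suc k" for k
  proof -
    have "Inf (V k) < a k + 1 / Suc k" unfolding a_def by simp
    then obtain v where "v \<in> V k" "v < a k + 1 / Suc k" using cInf_lessD[OF ne] by blast
    then show ?thesis unfolding V_def by blast
  qed
  then obtain L NN where LN: "\<And>k. tail_weights k (L k) (NN k)"
    and near_min: "\<And>k. exp_energy M h p (L k) (NN k) < a k + 1 / Suc k"
    by metis
  define d where "d k j = (\<integral>w. h w * (exp (- (convex_comb p (L k) (NN k) w / 2))
      - exp (- (convex_comb p (L j) (NN j) w / 2)))^2 \<partial>M)" for k j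
  define \<eta> where "\<eta> k = (SUP k. a k) - a k + 2 / Suc k" for k
  have d_le: "d k j \<le> \<eta> k" if "k \<le> j" for k j
  proof -
    have LNj: "tail_weights k (L j) (NN j)" using tail_weights_mono[OF LN that] .
    have "d k j \<le> (a k + 1 / Suc k) + (a j + 1 / Suc j) - 2 * a k"
      unfolding d_def exp_energy_mean[OF LN LNj]
      using near_min[of k] near_min[of j] a_le[OF tail_weights_mean[OF LN LNj]] by simp
    moreover have "1 / real (Suc j) \<le> 1 / real (Suc k)" using that by (intro divide_left_mono) auto
    ultimately show ?thesis using a_le_sup[of j] unfolding \<eta>_def by simp
  qed
  have d_sym: "d k j = d j k" for k j unfolding d_def by (simp add: power2_commute)
  have "\<eta> \<longlonglongrightarrow> (SUP k. a k) - (SUP k. a k) + 2 * 0"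
    unfolding \<eta>_def divide_inverse using a_lim by (intro tendsto_intros LIMSEQ_inverse_real_of_nat)
  then have "\<eta> \<longlonglongrightarrow> 0" by simp
  then have "\<exists>N. \<forall>k\<ge>N. \<forall>j\<ge>N. d k j < e" if "e > 0" for e
    using Cauchy_of_dominated[where d=d and \<eta>=\<eta>, OF d_le d_sym] that by blast
  with LN show ?thesis unfolding d_def by (rule that)
qed

end

lemma AE_liminf_convex_comb_finite:
  fixes p :: "nat \<Rightarrow> 'a \<Rightarrow> real"
  assumes p: "\<And>k. integrable M (p k)" "\<And>k w. 0 \<le> p k w" "\<And>k. L1norm M (p k) \<le> B"
    and lam: "\<And>n. \<forall>m. 0 \<le> lam n m" "\<And>n. (\<Sum>m<N n. lam n m) = 1"
  shows "AE w in M. liminf (\<lambda>n. ennreal (convex_comb p (lam n) (N n) w)) \<noteq> \<infinity>"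
proof (rule nn_integral_PInf_AE)
  have [measurable]: "convex_comb p (lam n) (N n) \<in> borel_measurable M" for n
    using p(1) by (intro convex_comb_measurable) auto
  then show "(\<lambda>w. liminf (\<lambda>n. ennreal (convex_comb p (lam n) (N n) w))) \<in> borel_measurable M"
    by measurable
  have "(\<integral>\<^sup>+w. ennreal (convex_comb p (lam n) (N n) w) \<partial>M) \<le> ennreal B" for n
  proof -
    have "0 \<le> convex_comb p (lam n) (N n) w" for w
      by (rule convex_comb_nonneg[where u=p, OF p(2) lam(1)])
    then have "convex_comb p (lam n) (N n) w = \<bar>convex_comb p (lam n) (N n) w\<bar>" for w by simp
    moreover have "integrable M (convex_comb p (lam n) (N n))"
      unfolding convex_comb_def using p(1) by auto
    ultimately show ?thesis
      using L1norm_convex_comb_le[OF p(1,3) lam(1,2)] L1norm_nn_integral[of M "convex_comb p (lam n) (N n)"]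
      by (simp add: ennreal_leI)
  qed
  then have "liminf (\<lambda>n. \<integral>\<^sup>+w. ennreal (convex_comb p (lam n) (N n) w) \<partial>M) \<le> liminf (\<lambda>n. ennreal B)"
    by (intro Liminf_mono always_eventually) auto
  then have "(\<integral>\<^sup>+w. liminf (\<lambda>n. ennreal (convex_comb p (lam n) (N n) w)) \<partial>M) \<le> ennreal B"
    by (intro order_trans[OF nn_integral_liminf]) (simp_all add: Liminf_const)
  then show "(\<integral>\<^sup>+w. liminf (\<lambda>n. ennreal (convex_comb p (lam n) (N n) w)) \<partial>M) \<noteq> \<infinity>"
    using neq_top_trans[OF ennreal_neq_top[of B]] by simp
qed

lemma AE_convergent_tail_convex_comb_nonneg:
  fixes p :: "nat \<Rightarrow> 'a \<Rightarrow> real"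
  assumes M: "sigma_finite_measure M"
    and p: "\<And>k. integrable M (p k)" "\<And>k w. 0 \<le> p k w" "\<And>k. L1norm M (p k) \<le> B"
  obtains L NN where "\<And>k. tail_weights k (L k) (NN k)"
    "AE w in M. convergent (\<lambda>k. convex_comb p (L k) (NN k) w)"
proof -
  obtain h :: "'a \<Rightarrow> real"
    where h: "h \<in> borel_measurable M" "\<And>x. 0 < h x" "\<And>x. h x \<le> 1" "integrable M h"
    using sigma_finite_measure.obtain_positive_integrable_function[OF M] by blast
  have p_meas: "\<And>k. p k \<in> borel_measurable M" using p(1) by auto
  obtain L NN where LN: "\<And>k. tail_weights k (L k) (NN k)"
    and cau: "\<And>e. e > 0 \<Longrightarrow> \<exists>N. \<forall>k\<ge>N. \<forall>j\<ge>N. (\<integral>w. h w * (exp (- (convex_comb p (L k) (NN k) w / 2))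
        - exp (- (convex_comb p (L j) (NN j) w / 2)))^2 \<partial>M) < e"
    using tail_weights_exp_Cauchy[where p=p, OF p_meas p(2) h(1,2,4)] by blast
  have comb_nonneg: "0 \<le> convex_comb p (L k) (NN k) w" for k w
    using convex_comb_nonneg[where u=p, OF p(2)] LN[of k] unfolding tail_weights_def by blast
  have [measurable]: "convex_comb p lam N \<in> borel_measurable M" for lam N
    using p_meas by (rule convex_comb_measurable)
  obtain r where r: "strict_mono r"
    "AE w in M. convergent (\<lambda>n. exp (- (convex_comb p (L (r n)) (NN (r n)) w / 2)))"
    by (rule AE_convergent_subseq_of_weighted_L2_Cauchy[OF h(1,2,4),
          where G="\<lambda>k w. exp (- (convex_comb p (L k) (NN k) w / 2))", OF _ _ cau])
      (use comb_nonneg in auto)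
  have LN_r: "tail_weights k (L (r k)) (NN (r k))" for k
    using tail_weights_mono[OF LN seq_suble[OF r(1)]] .
  then have "AE w in M. liminf (\<lambda>n. ennreal (convex_comb p (L (r n)) (NN (r n)) w)) \<noteq> \<infinity>"
    by (intro AE_liminf_convex_comb_finite[OF p]) (auto simp: tail_weights_def)
  with r(2) have "AE w in M. convergent (\<lambda>k. convex_comb p (L (r k)) (NN (r k)) w)"
  proof eventually_elim
    case (elim w)
    show ?case by (rule convergent_of_convergent_exp) (use elim comb_nonneg in auto)
  qed
  with LN_r show ?thesis by (rule that)
qed

text \<open>The positive and negative parts are treated one after the other; composing the two
  sequences of weights preserves the convergence obtained first.\<close>

lemma AE_convergent_tail_convex_comb:
  fixes f :: "nat \<Rightarrow> 'a \<Rightarrow> real"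
  assumes M: "sigma_finite_measure M" and f: "\<And>k. integrable M (f k)" "\<And>k. L1norm M (f k) \<le> B"
  obtains lam N where "\<And>k. tail_weights k (lam k) (N k)"
    "AE w in M. convergent (\<lambda>k. convex_comb f (lam k) (N k) w)"
proof -
  define p where "p k w = max (f k w) 0" for k w
  define q where "q k w = max (- f k w) 0" for k w
  have p_int: "integrable M (p k)" and q_int: "integrable M (q k)" for k
    using f(1) unfolding p_def q_def by auto
  have p: "integrable M (p k)" "0 \<le> p k w" "L1norm M (p k) \<le> B" for k w
    using p_int by (auto simp: p_def intro!: order_trans[OF L1norm_le_of_abs_le[OF f(1)[of k] p_int[of k]] f(2)[of k]])
  have q: "integrable M (q k)" "0 \<le> q k w" "L1norm M (q k) \<le> B" for k w
    using q_int by (auto simp: q_def intro!: order_trans[OF L1norm_le_of_abs_le[OF f(1)[of k] q_int[of k]] f(2)[of k]])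
  obtain lam1 N1 where lam1: "\<And>k. tail_weights k (lam1 k) (N1 k)"
    and P: "AE w in M. convergent (\<lambda>k. convex_comb p (lam1 k) (N1 k) w)"
    using AE_convergent_tail_convex_comb_nonneg[OF M, where p=p, OF p] by blast
  define q' where "q' k = convex_comb q (lam1 k) (N1 k)" for k
  have q': "integrable M (q' k)" "0 \<le> q' k w" "L1norm M (q' k) \<le> B" for k w
    using lam1[of k] q unfolding q'_def convex_comb_def tail_weights_def
    by (auto intro!: sum_nonneg L1norm_convex_comb_le[unfolded convex_comb_def])
  obtain mu K where mu: "\<And>k. tail_weights k (mu k) (K k)"
    and Q: "AE w in M. convergent (\<lambda>k. convex_comb q' (mu k) (K k) w)"
    using AE_convergent_tail_convex_comb_nonneg[OF M, where p=q', OF q'] by blast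
  define lam where "lam k = (\<lambda>m. \<Sum>i<K k. mu k i * lam1 i m)" for k
  define N where "N k = (\<Sum>i<K k. N1 i)" for k
  have comb_f: "convex_comb f (lam k) (N k) w
      = convex_comb (\<lambda>i. convex_comb p (lam1 i) (N1 i)) (mu k) (K k) w - convex_comb q' (mu k) (K k) w" for k w
  proof -
    have "f = (\<lambda>m w. p m w - q m w)" by (auto simp: fun_eq_iff p_def q_def)
    then have "convex_comb f (lam k) (N k) w = convex_comb p (lam k) (N k) w - convex_comb q (lam k) (N k) w"
      by (simp add: convex_comb_diff)
    also have "convex_comb p (lam k) (N k) = convex_comb (\<lambda>i. convex_comb p (lam1 i) (N1 i)) (mu k) (K k)"
      unfolding lam_def N_def by (rule convex_comb_compose[OF lam1, symmetric])
    also have "convex_comb q (lam k) (N k) = convex_comb q' (mu k) (K k)"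
      unfolding lam_def N_def q'_def by (rule convex_comb_compose[OF lam1, symmetric])
    finally show ?thesis .
  qed
  have "AE w in M. convergent (\<lambda>k. convex_comb f (lam k) (N k) w)"
    using P Q
  proof eventually_elim
    case (elim w)
    then obtain l where "(\<lambda>i. convex_comb p (lam1 i) (N1 i) w) \<longlonglongrightarrow> l" by (auto simp: convergent_def)
    then have "convergent (\<lambda>k. convex_comb (\<lambda>i. convex_comb p (lam1 i) (N1 i)) (mu k) (K k) w)"
      using tail_convex_comb_tendsto[OF _ mu] by (auto simp: convergent_def convex_comb_def[of _ "mu _"])
    then show ?case unfolding comb_f using elim(2) by (rule convergent_diff)
  qed
  moreover have "tail_weights k (lam k) (N k)" for k
    unfolding lam_def N_def by (rule tail_weights_compose[OF lam1 mu])
  ultimately show ?thesis using that by blast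
qed

lemma AE_tendsto_tail_convex_comb:
  fixes f :: "nat \<Rightarrow> 'a \<Rightarrow> real"
  assumes M: "sigma_finite_measure M" and f: "\<And>k. integrable M (f k)" "\<And>k. L1norm M (f k) \<le> B"
  obtains lam N g where "\<And>k. tail_weights k (lam k) (N k)" "g \<in> borel_measurable M"
    "AE w in M. (\<lambda>k. convex_comb f (lam k) (N k) w) \<longlonglongrightarrow> g w"
proof -
  obtain lam N where lam: "\<And>k. tail_weights k (lam k) (N k)"
    and conv: "AE w in M. convergent (\<lambda>k. convex_comb f (lam k) (N k) w)"
    using AE_convergent_tail_convex_comb[where f=f, OF M f] by blast
  have "(\<lambda>w. lim (\<lambda>k. convex_comb f (lam k) (N k) w)) \<in> borel_measurable M"
    unfolding convex_comb_def using f(1) by measurable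
  moreover have "AE w in M. (\<lambda>k. convex_comb f (lam k) (N k) w) \<longlonglongrightarrow> lim (\<lambda>k. convex_comb f (lam k) (N k) w)"
    using conv by eventually_elim (simp add: convergent_LIMSEQ_iff)
  ultimately show ?thesis using lam that by blast
qed

section \<open>Fixed points of affine Lipschitzian maps\<close>

locale affine_lipschitz_self_map =
  fixes M :: "'a measure" and C :: "('a \<Rightarrow> real) set"
    and T :: "('a \<Rightarrow> real) \<Rightarrow> ('a \<Rightarrow> real)"
  assumes sigma_finite: "sigma_finite_measure M"
    and subset: "L1_subset M C" and nonempty: "C \<noteq> {}"
    and closed: "L1_closed M C" and convex: "L1_convex C" and bounded: "L1_bounded M C"
    and self_map: "\<forall>x\<in>C. T x \<in> C"
    and affine: "L1_affine M C T" and lipschitz: "L1_lipschitzian M C T"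
begin

lemma mem_integrable: "x \<in> C \<Longrightarrow> integrable M x"
  using subset unfolding L1_subset_def by auto

lemma map_mem: "x \<in> C \<Longrightarrow> T x \<in> C"
  using self_map by auto

lemma iterate_mem: "x \<in> C \<Longrightarrow> (T ^^ k) x \<in> C"
  by (induction k) (auto simp: map_mem)

lemma diff_integrable: "x \<in> C \<Longrightarrow> y \<in> C \<Longrightarrow> integrable M (\<lambda>w. x w - y w)"
  using mem_integrable by auto

lemma L1norm_bounded: "\<exists>B\<ge>0. \<forall>x\<in>C. L1norm M x \<le> B"
  using bounded nonempty L1norm_nonneg unfolding L1_bounded_def by (metis all_not_in_conv order_trans)

lemma diameter_bounded: "\<exists>D\<ge>0. \<forall>x\<in>C. \<forall>y\<in>C. L1norm M (\<lambda>w. x w - y w) \<le> D"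
proof -
  obtain B where B: "B \<ge> 0" "\<forall>x\<in>C. L1norm M x \<le> B" using L1norm_bounded by auto
  have "L1norm M (\<lambda>w. x w - y w) \<le> 2 * B" if "x \<in> C" "y \<in> C" for x y
  proof -
    have "L1norm M (\<lambda>w. x w - y w) \<le> L1norm M x + L1norm M (\<lambda>w. - y w)"
      using L1norm_add_le[of M x "\<lambda>w. - y w"] that mem_integrable by simp
    also have "\<dots> \<le> 2 * B" using B(2) that by (simp add: L1norm_uminus) (metis add_mono mult_2)
    finally show ?thesis .
  qed
  with B show ?thesis by (intro exI[of _ "2 * B"]) auto
qed

lemma iterate_lipschitz:
  "\<exists>K\<ge>0. \<forall>x\<in>C. \<forall>y\<in>C. L1norm M (\<lambda>w. (T^^k) x w - (T^^k) y w) \<le> K * L1norm M (\<lambda>w. x w - y w)"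
proof (induction k)
  case 0
  then show ?case by (intro exI[of _ 1]) auto
next
  case (Suc k)
  then obtain K where K: "K \<ge> 0"
    "\<forall>x\<in>C. \<forall>y\<in>C. L1norm M (\<lambda>w. (T^^k) x w - (T^^k) y w) \<le> K * L1norm M (\<lambda>w. x w - y w)"
    by auto
  obtain L where L: "\<forall>x\<in>C. \<forall>y\<in>C. L1norm M (\<lambda>w. T x w - T y w) \<le> L * L1norm M (\<lambda>w. x w - y w)"
    using lipschitz unfolding L1_lipschitzian_def by auto
  have "L1norm M (\<lambda>w. (T^^Suc k) x w - (T^^Suc k) y w) \<le> (max L 0 * K) * L1norm M (\<lambda>w. x w - y w)"
    if "x \<in> C" "y \<in> C" for x y
  proof -
    have "L1norm M (\<lambda>w. (T^^Suc k) x w - (T^^Suc k) y w) \<le> L * L1norm M (\<lambda>w. (T^^k) x w - (T^^k) y w)"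
      using L that iterate_mem by simp
    also have "\<dots> \<le> max L 0 * (K * L1norm M (\<lambda>w. x w - y w))"
      using K that L1norm_nonneg by (intro mult_mono) (auto intro: order_trans)
    finally show ?thesis by simp
  qed
  with K show ?case by (intro exI[of _ "max L 0 * K"]) auto
qed

lemma iterate_dist_le_lip_const:
  assumes "x \<in> C" "y \<in> C"
  shows "L1norm M (\<lambda>w. (T^^k) x w - (T^^k) y w) \<le> lip_const M C (T^^k) * L1norm M (\<lambda>w. x w - y w)"
proof -
  obtain K where K: "K \<ge> 0"
    "\<forall>x\<in>C. \<forall>y\<in>C. L1norm M (\<lambda>w. (T^^k) x w - (T^^k) y w) \<le> K * L1norm M (\<lambda>w. x w - y w)"
    using iterate_lipschitz by blast
  show ?thesis
  proof (cases "L1norm M (\<lambda>w. x w - y w) = 0")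
    case True
    then show ?thesis using K assms L1norm_nonneg[of M "\<lambda>w. (T^^k) x w - (T^^k) y w"]
      by (metis mult_zero_right)
  next
    case False
    then have pos: "L1norm M (\<lambda>w. x w - y w) > 0" using L1norm_nonneg[of M] by (simp add: order_less_le)
    let ?S = "{L1norm M (\<lambda>w. (T^^k) x w - (T^^k) y w) / L1norm M (\<lambda>w. x w - y w) | x y.
      x \<in> C \<and> y \<in> C \<and> L1norm M (\<lambda>w. x w - y w) \<noteq> 0}"
    have "bdd_above ?S"
    proof (rule bdd_aboveI[of _ K])
      fix r assume "r \<in> ?S"
      then obtain x y where "x \<in> C" "y \<in> C" "L1norm M (\<lambda>w. x w - y w) \<noteq> 0"
        "r = L1norm M (\<lambda>w. (T^^k) x w - (T^^k) y w) / L1norm M (\<lambda>w. x w - y w)" by blast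
      moreover have "L1norm M (\<lambda>w. x w - y w) > 0"
        using calculation(3) L1norm_nonneg[of M] by (simp add: order_less_le)
      ultimately show "r \<le> K" using K by (simp add: divide_le_eq)
    qed
    then have "L1norm M (\<lambda>w. (T^^k) x w - (T^^k) y w) / L1norm M (\<lambda>w. x w - y w) \<le> lip_const M C (T^^k)"
      unfolding lip_const_def using assms False by (intro cSup_upper) auto
    then show ?thesis using pos by (simp add: divide_le_eq)
  qed
qed

lemma lip_const_nonneg:
  assumes "x \<in> C" "y \<in> C" "L1norm M (\<lambda>w. x w - y w) \<noteq> 0"
  shows "0 \<le> lip_const M C (T^^k)"
proof -
  have "0 \<le> lip_const M C (T^^k) * L1norm M (\<lambda>w. x w - y w)"
    using order_trans[OF L1norm_nonneg iterate_dist_le_lip_const[OF assms(1,2)]] .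
  moreover have "0 < L1norm M (\<lambda>w. x w - y w)" using assms(3) L1norm_nonneg[of M "\<lambda>w. x w - y w"] by simp
  ultimately show ?thesis by (simp add: zero_le_mult_iff)
qed

lemma L1norm_map_convex_comb_diff_le:
  assumes u: "\<And>m. u m \<in> C" and lam: "\<forall>m. 0 \<le> lam m" "(\<Sum>m<N. lam m) = 1"
  shows "L1norm M (\<lambda>w. T (convex_comb u lam N) w - convex_comb u lam N w)
     \<le> (\<Sum>m<N. lam m * L1norm M (\<lambda>w. T (u m) w - u m w))"
proof -
  have uC: "convex_comb u lam N \<in> C" using convex_comb_mem[where u=u, OF convex u lam] .
  have "AE w in M. T (convex_comb u lam N) w - convex_comb u lam N w = (\<Sum>m<N. lam m * (T (u m) w - u m w))"
    using affine_convex_comb_AE[where u=u, OF convex affine u lam]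
    by eventually_elim (simp add: convex_comb_def right_diff_distrib sum_subtractf)
  then have "L1norm M (\<lambda>w. T (convex_comb u lam N) w - convex_comb u lam N w)
     = L1norm M (\<lambda>w. \<Sum>m<N. lam m * (T (u m) w - u m w))"
    using uC u map_mem diff_integrable by (intro L1norm_cong_AE) auto
  also have "\<dots> \<le> (\<Sum>m<N. \<bar>lam m\<bar> * L1norm M (\<lambda>w. T (u m) w - u m w))"
    using u map_mem diff_integrable by (intro L1norm_weighted_sum_le) auto
  finally show ?thesis using lam by simp
qed

definition cesaro_mean :: "('a \<Rightarrow> real) \<Rightarrow> nat \<Rightarrow> 'a \<Rightarrow> real" where
  "cesaro_mean c m = convex_comb (\<lambda>j. (T^^j) c) (cesaro_weights m) (Suc m)"

lemma cesaro_mean_mem: "c \<in> C \<Longrightarrow> 1 \<le> m \<Longrightarrow> cesaro_mean c m \<in> C"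
  unfolding cesaro_mean_def
  by (rule convex_comb_mem[OF convex iterate_mem cesaro_weights_nonneg cesaro_weights_sum])

text \<open>By affinity, \<open>T\<close> moves the Cesaro mean by the telescoping difference \<open>(T\<^sup>m (T c) - T c) / m\<close>.\<close>

lemma L1norm_map_cesaro_mean_diff_le:
  assumes c: "c \<in> C" and m: "1 \<le> m" and D: "\<forall>x\<in>C. \<forall>y\<in>C. L1norm M (\<lambda>w. x w - y w) \<le> D"
  shows "L1norm M (\<lambda>w. T (cesaro_mean c m) w - cesaro_mean c m w) \<le> D / real m"
proof -
  have "AE w in M. T (cesaro_mean c m) w = convex_comb (\<lambda>j. T ((T^^j) c)) (cesaro_weights m) (Suc m) w"
    unfolding cesaro_mean_def
    by (rule affine_convex_comb_AE[OF convex affine iterate_mem[OF c] cesaro_weights_nonneg cesaro_weights_sum[OF m]])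
  then have "AE w in M. T (cesaro_mean c m) w - cesaro_mean c m w = ((T^^Suc m) c w - (T^^1) c w) / real m"
  proof eventually_elim
    case (elim w)
    have "T (cesaro_mean c m) w - cesaro_mean c m w
        = (\<Sum>j<Suc m. cesaro_weights m j * ((T^^Suc j) c w - (T^^j) c w))"
      using elim unfolding cesaro_mean_def convex_comb_def
      by (simp add: right_diff_distrib sum_subtractf del: sum.lessThan_Suc)
    also have "\<dots> = (\<Sum>j=1..m. (T^^Suc j) c w - (T^^j) c w) / real m"
      by (rule sum_cesaro_weights)
    also have "\<dots> = ((T^^Suc m) c w - (T^^1) c w) / real m"
      using m by (subst sum_Suc_diff) auto
    finally show ?case .
  qed
  then have "L1norm M (\<lambda>w. T (cesaro_mean c m) w - cesaro_mean c m w)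
      = L1norm M (\<lambda>w. (1 / real m) * ((T^^Suc m) c w - (T^^1) c w))"
    using c m cesaro_mean_mem map_mem iterate_mem diff_integrable by (intro L1norm_cong_AE) auto
  also have "\<dots> = (1 / real m) * L1norm M (\<lambda>w. (T^^Suc m) c w - (T^^1) c w)"
    by (rule trans[OF L1norm_mult]) simp
  also have "\<dots> \<le> (1 / real m) * D"
    using D iterate_mem[OF c, of "Suc m"] iterate_mem[OF c, of 1] by (intro mult_left_mono) auto
  finally show ?thesis by simp
qed

lemma L1norm_cesaro_mean_diff_le:
  assumes "c \<in> C" "1 \<le> m" "integrable M y"
  shows "L1norm M (\<lambda>w. cesaro_mean c m w - y w) \<le> (\<Sum>j=1..m. L1norm M (\<lambda>w. (T^^j) c w - y w)) / real m"
  using L1norm_convex_comb_diff_le[of M "\<lambda>j. (T^^j) c" y "cesaro_weights m" "Suc m"] assms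
    iterate_mem mem_integrable cesaro_weights_nonneg cesaro_weights_sum
  unfolding cesaro_mean_def sum_cesaro_weights by auto

lemma iterate_approx_fixed:
  "\<exists>K\<ge>0. \<forall>y\<in>C. L1norm M (\<lambda>w. (T^^j) y w - y w) \<le> K * L1norm M (\<lambda>w. T y w - y w)"
proof (induction j)
  case 0
  then show ?case by (intro exI[of _ 0]) (simp add: L1norm_def)
next
  case (Suc j)
  obtain K where K: "K \<ge> 0" "\<forall>y\<in>C. L1norm M (\<lambda>w. (T^^j) y w - y w) \<le> K * L1norm M (\<lambda>w. T y w - y w)"
    using Suc by auto
  obtain K' where K': "K' \<ge> 0"
    "\<forall>x\<in>C. \<forall>y\<in>C. L1norm M (\<lambda>w. (T^^j) x w - (T^^j) y w) \<le> K' * L1norm M (\<lambda>w. x w - y w)"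
    using iterate_lipschitz by blast
  have "L1norm M (\<lambda>w. (T^^Suc j) y w - y w) \<le> (K' + K) * L1norm M (\<lambda>w. T y w - y w)" if y: "y \<in> C" for y
  proof -
    have "L1norm M (\<lambda>w. (T^^Suc j) y w - y w)
        \<le> L1norm M (\<lambda>w. (T^^j) (T y) w - (T^^j) y w) + L1norm M (\<lambda>w. (T^^j) y w - y w)"
      unfolding funpow_Suc_right comp_def using y map_mem iterate_mem mem_integrable by (intro L1norm_triangle) auto
    also have "\<dots> \<le> K' * L1norm M (\<lambda>w. T y w - y w) + K * L1norm M (\<lambda>w. T y w - y w)"
      using K K' y map_mem by (intro add_mono) auto
    finally show ?thesis by (simp add: algebra_simps)
  qed
  with K K' show ?case by (intro exI[of _ "K' + K"]) auto
qed

lemma fixed_point_of_approx_fixed_limit: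
  assumes y: "\<And>j. y j \<in> C" and z: "integrable M z"
    and yz: "(\<lambda>j. L1norm M (\<lambda>w. y j w - z w)) \<longlonglongrightarrow> 0"
    and Ty: "(\<lambda>j. L1norm M (\<lambda>w. T (y j) w - y j w)) \<longlonglongrightarrow> 0"
  shows "z \<in> C \<and> (AE w in M. T z w = z w)"
proof -
  have zC: "z \<in> C" using closed y z yz unfolding L1_closed_def by blast
  obtain K where K: "\<forall>x\<in>C. \<forall>y\<in>C. L1norm M (\<lambda>w. T x w - T y w) \<le> K * L1norm M (\<lambda>w. x w - y w)"
    using lipschitz unfolding L1_lipschitzian_def by blast
  have bound: "L1norm M (\<lambda>w. T z w - z w)
      \<le> K * L1norm M (\<lambda>w. y j w - z w) + L1norm M (\<lambda>w. T (y j) w - y j w) + L1norm M (\<lambda>w. y j w - z w)" for j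
  proof -
    have "L1norm M (\<lambda>w. T z w - z w) \<le> L1norm M (\<lambda>w. T z w - T (y j) w) + L1norm M (\<lambda>w. T (y j) w - z w)"
      using zC y map_mem mem_integrable by (intro L1norm_triangle) auto
    also have "L1norm M (\<lambda>w. T (y j) w - z w) \<le> L1norm M (\<lambda>w. T (y j) w - y j w) + L1norm M (\<lambda>w. y j w - z w)"
      using zC y map_mem mem_integrable by (intro L1norm_triangle) auto
    also have "L1norm M (\<lambda>w. T z w - T (y j) w) \<le> K * L1norm M (\<lambda>w. y j w - z w)"
      using K zC y L1norm_diff_commute[of M z "y j"] by metis
    finally show ?thesis by simp
  qed
  have "(\<lambda>j. K * L1norm M (\<lambda>w. y j w - z w) + L1norm M (\<lambda>w. T (y j) w - y j w) + L1norm M (\<lambda>w. y j w - z w))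
     \<longlonglongrightarrow> K * 0 + 0 + 0"
    using yz Ty by (intro tendsto_intros)
  then have "L1norm M (\<lambda>w. T z w - z w) \<le> 0"
    using bound by (intro LIMSEQ_le_const) auto
  then have "L1norm M (\<lambda>w. T z w - z w) = 0" using L1norm_nonneg[of M] by (simp add: order_antisym)
  then have "AE w in M. T z w - z w = 0" using zC map_mem by (intro AE_eq_0_if_L1norm_eq_0 diff_integrable) auto
  with zC show ?thesis by auto
qed

definition approx_fixed_seq :: "(nat \<Rightarrow> 'a \<Rightarrow> real) \<Rightarrow> ('a \<Rightarrow> real) \<Rightarrow> real \<Rightarrow> bool" where
  "approx_fixed_seq xs x R \<longleftrightarrow> (\<forall>n. xs n \<in> C) \<and> integrable M x \<and> (AE w in M. (\<lambda>n. xs n w) \<longlonglongrightarrow> x w) \<and>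
     (\<lambda>n. L1norm M (\<lambda>w. xs n w - x w)) \<longlonglongrightarrow> R \<and> (\<lambda>n. L1norm M (\<lambda>w. T (xs n) w - xs n w)) \<longlonglongrightarrow> 0"

lemma approx_fixed_seq_radius_nonneg: "approx_fixed_seq xs x R \<Longrightarrow> 0 \<le> R"
  unfolding approx_fixed_seq_def by (auto intro: LIMSEQ_le_const L1norm_nonneg)

lemma approx_fixed_seq_dist_tendsto:
  assumes xs: "approx_fixed_seq xs x R" and c: "integrable M c"
  shows "(\<lambda>n. L1norm M (\<lambda>w. xs n w - c w)) \<longlonglongrightarrow> L1norm M (\<lambda>w. x w - c w) + R"
proof -
  have lim: "AE w in M. (\<lambda>n. xs n w) \<longlonglongrightarrow> x w" "(\<lambda>n. L1norm M (\<lambda>w. xs n w - x w)) \<longlonglongrightarrow> R"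
    and int: "\<And>n. integrable M (xs n)" "integrable M x"
    using xs mem_integrable unfolding approx_fixed_seq_def by auto
  have "(\<lambda>n. L1norm M (\<lambda>w. (x w - c w) + (xs n w - x w)) - L1norm M (\<lambda>w. xs n w - x w))
      \<longlonglongrightarrow> L1norm M (\<lambda>w. x w - c w)"
    using int lim c by (intro L1norm_Brezis_Lieb) auto
  from tendsto_add[OF this lim(2)] show ?thesis by simp
qed

lemma approx_fixed_seq_iterate:
  assumes "approx_fixed_seq xs x R"
  shows "(\<lambda>n. L1norm M (\<lambda>w. (T^^j) (xs n) w - xs n w)) \<longlonglongrightarrow> 0"
proof -
  obtain K where K: "\<forall>y\<in>C. L1norm M (\<lambda>w. (T^^j) y w - y w) \<le> K * L1norm M (\<lambda>w. T y w - y w)"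
    using iterate_approx_fixed by blast
  have "(\<lambda>n. K * L1norm M (\<lambda>w. T (xs n) w - xs n w)) \<longlonglongrightarrow> K * 0"
    using assms unfolding approx_fixed_seq_def by (intro tendsto_intros) auto
  then have lim: "(\<lambda>n. K * L1norm M (\<lambda>w. T (xs n) w - xs n w)) \<longlonglongrightarrow> 0" by simp
  have "L1norm M (\<lambda>w. (T^^j) (xs n) w - xs n w) \<le> K * L1norm M (\<lambda>w. T (xs n) w - xs n w)" for n
    using assms K unfolding approx_fixed_seq_def by blast
  then show ?thesis
    by (intro tendsto_sandwich[OF _ _ tendsto_const lim] always_eventually allI L1norm_nonneg)
qed

lemma approx_fixed_seq_of_AE_tendsto:
  assumes u: "\<And>k. u k \<in> C" and Tu: "(\<lambda>k. L1norm M (\<lambda>w. T (u k) w - u k w)) \<longlonglongrightarrow> 0"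
    and g: "g \<in> borel_measurable M" "AE w in M. (\<lambda>k. u k w) \<longlonglongrightarrow> g w"
  obtains s R where "strict_mono s" "approx_fixed_seq (\<lambda>n. u (s n)) g R"
proof -
  obtain B where B: "\<forall>x\<in>C. L1norm M x \<le> B" using L1norm_bounded by auto
  have g_int: "integrable M g" "L1norm M g \<le> B"
    using integrable_L1norm_le_of_AE_tendsto[of M u g B] u B mem_integrable g by auto
  have "\<bar>L1norm M (\<lambda>w. u k w - g w)\<bar> \<le> 2 * B" for k
  proof -
    have "L1norm M (\<lambda>w. u k w - g w) \<le> L1norm M (u k) + L1norm M g"
      using L1norm_add_le[of M "u k" "\<lambda>w. - g w"] u g_int mem_integrable by (simp add: L1norm_uminus)
    then show ?thesis using u[of k] B g_int L1norm_nonneg[of M "\<lambda>w. u k w - g w"] by force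
  qed
  then have "bounded (range (\<lambda>k. L1norm M (\<lambda>w. u k w - g w)))" by (auto simp: bounded_iff)
  then obtain R s where s: "strict_mono s" "(\<lambda>n. L1norm M (\<lambda>w. u (s n) w - g w)) \<longlonglongrightarrow> R"
    using bounded_imp_convergent_subsequence unfolding comp_def by blast
  moreover have "AE w in M. (\<lambda>n. u (s n) w) \<longlonglongrightarrow> g w"
    using g(2) by eventually_elim (rule LIMSEQ_subseq_LIMSEQ[OF _ s(1), unfolded comp_def])
  moreover have "(\<lambda>n. L1norm M (\<lambda>w. T (u (s n)) w - u (s n) w)) \<longlonglongrightarrow> 0"
    using LIMSEQ_subseq_LIMSEQ[OF Tu s(1)] by (simp add: comp_def)
  ultimately have "approx_fixed_seq (\<lambda>n. u (s n)) g R"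
    using u g_int unfolding approx_fixed_seq_def by blast
  with s(1) show ?thesis by (rule that)
qed

lemma approx_fixed_seq_of_approx_fixed:
  assumes v: "\<And>k. v k \<in> C" and E: "\<And>k. L1norm M (\<lambda>w. T (v k) w - v k w) \<le> E / real (Suc k)"
    and x: "integrable M x" and \<rho>: "\<And>k. L1norm M (\<lambda>w. v k w - x w) \<le> \<rho>"
  obtains xs y R where "approx_fixed_seq xs y R" "L1norm M (\<lambda>w. y w - x w) + R \<le> \<rho>"
proof -
  obtain B where B: "\<forall>x\<in>C. L1norm M x \<le> B" using L1norm_bounded by auto
  obtain lam N g where lam: "\<And>k. tail_weights k (lam k) (N k)" and g: "g \<in> borel_measurable M"
    "AE w in M. (\<lambda>k. convex_comb v (lam k) (N k) w) \<longlonglongrightarrow> g w"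
    using AE_tendsto_tail_convex_comb[OF sigma_finite, of v B] v B mem_integrable by blast
  define u where "u k = convex_comb v (lam k) (N k)" for k
  have lam_nonneg: "\<forall>m. 0 \<le> lam k m" and lam_sum: "(\<Sum>m<N k. lam k m) = 1" for k
    using lam unfolding tail_weights_def by auto
  have uC: "u k \<in> C" for k unfolding u_def using convex_comb_mem[OF convex v lam_nonneg lam_sum] .
  have u_x: "L1norm M (\<lambda>w. u k w - x w) \<le> \<rho>" for k
    unfolding u_def using v mem_integrable x lam_nonneg lam_sum \<rho>
    by (intro order_trans[OF L1norm_convex_comb_diff_le tail_weights_sum_le[OF lam]]) auto
  have "0 \<le> E" using E[of 0] L1norm_nonneg[of M "\<lambda>w. T (v 0) w - v 0 w"] by simp
  then have "L1norm M (\<lambda>w. T (v m) w - v m w) \<le> E / real (Suc k)" if "k \<le> m" for k m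
  proof -
    have "E / real (Suc m) \<le> E / real (Suc k)" using that \<open>0 \<le> E\<close> by (intro divide_left_mono) auto
    then show ?thesis using E[of m] by linarith
  qed
  then have u_approx: "L1norm M (\<lambda>w. T (u k) w - u k w) \<le> E / real (Suc k)" for k
    unfolding u_def using v lam_nonneg lam_sum
    by (intro order_trans[OF L1norm_map_convex_comb_diff_le tail_weights_sum_le[OF lam]])
  have E_lim: "(\<lambda>k. E / real (Suc k)) \<longlonglongrightarrow> 0"
    using tendsto_mult_left[OF LIMSEQ_inverse_real_of_nat, of E] by (simp add: divide_inverse)
  have "(\<lambda>k. L1norm M (\<lambda>w. T (u k) w - u k w)) \<longlonglongrightarrow> 0"
    using u_approx by (intro tendsto_sandwich[OF _ _ tendsto_const E_lim] always_eventually allI L1norm_nonneg)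
  then obtain s R where seq: "approx_fixed_seq (\<lambda>n. u (s n)) g R"
    using approx_fixed_seq_of_AE_tendsto[where u=u, OF uC _ g[folded u_def]] by blast
  have "(\<lambda>n. L1norm M (\<lambda>w. u (s n) w - x w)) \<longlonglongrightarrow> L1norm M (\<lambda>w. g w - x w) + R"
    by (rule approx_fixed_seq_dist_tendsto[OF seq x])
  then have "L1norm M (\<lambda>w. g w - x w) + R \<le> \<rho>"
    using u_x by (intro LIMSEQ_le_const2) auto
  with seq show ?thesis by (rule that)
qed

lemma approx_fixed_seq_cesaro_dist_le:
  assumes xs: "approx_fixed_seq xs x R" and c: "c \<in> C" and m: "1 \<le> m"
  shows "L1norm M (\<lambda>w. x w - cesaro_mean c m w) + R
    \<le> (\<Sum>j=1..m. lip_const M C (T^^j)) / real m * (L1norm M (\<lambda>w. x w - c w) + R)"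
proof -
  let ?u = "cesaro_mean c m" and ?L = "\<lambda>j. lip_const M C (T^^j)"
  have xsC: "xs n \<in> C" for n using xs unfolding approx_fixed_seq_def by blast
  have uC: "?u \<in> C" using cesaro_mean_mem[OF c m] .
  have bound: "L1norm M (\<lambda>w. xs n w - ?u w)
      \<le> (\<Sum>j=1..m. ?L j * L1norm M (\<lambda>w. c w - xs n w) + L1norm M (\<lambda>w. (T^^j) (xs n) w - xs n w)) / real m" for n
  proof -
    have "L1norm M (\<lambda>w. xs n w - ?u w) \<le> (\<Sum>j=1..m. L1norm M (\<lambda>w. (T^^j) c w - xs n w)) / real m"
      using L1norm_cesaro_mean_diff_le[OF c m mem_integrable[OF xsC]] L1norm_diff_commute[of M "xs n" ?u]
      by simp
    also have "\<dots> \<le> (\<Sum>j=1..m. ?L j * L1norm M (\<lambda>w. c w - xs n w) + L1norm M (\<lambda>w. (T^^j) (xs n) w - xs n w)) / real m"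
    proof (intro divide_right_mono sum_mono)
      fix j
      have "L1norm M (\<lambda>w. (T^^j) c w - xs n w)
          \<le> L1norm M (\<lambda>w. (T^^j) c w - (T^^j) (xs n) w) + L1norm M (\<lambda>w. (T^^j) (xs n) w - xs n w)"
        using c xsC iterate_mem mem_integrable by (intro L1norm_triangle) auto
      also have "\<dots> \<le> ?L j * L1norm M (\<lambda>w. c w - xs n w) + L1norm M (\<lambda>w. (T^^j) (xs n) w - xs n w)"
        using iterate_dist_le_lip_const[OF c xsC] by simp
      finally show "L1norm M (\<lambda>w. (T^^j) c w - xs n w)
          \<le> ?L j * L1norm M (\<lambda>w. c w - xs n w) + L1norm M (\<lambda>w. (T^^j) (xs n) w - xs n w)" .
    qed simp
    finally show ?thesis .
  qed
  have "(\<lambda>n. (\<Sum>j=1..m. ?L j * L1norm M (\<lambda>w. c w - xs n w) + L1norm M (\<lambda>w. (T^^j) (xs n) w - xs n w)) / real m)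
      \<longlonglongrightarrow> (\<Sum>j=1..m. ?L j * (L1norm M (\<lambda>w. x w - c w) + R) + 0) / real m"
    using approx_fixed_seq_dist_tendsto[OF xs mem_integrable[OF c]] approx_fixed_seq_iterate[OF xs] m
    by (intro tendsto_intros) (simp_all add: L1norm_diff_commute[of M c])
  with approx_fixed_seq_dist_tendsto[OF xs mem_integrable[OF uC]] bound
  have "L1norm M (\<lambda>w. x w - ?u w) + R \<le> (\<Sum>j=1..m. ?L j * (L1norm M (\<lambda>w. x w - c w) + R) + 0) / real m"
    by (intro LIMSEQ_le) auto
  then show ?thesis by (simp add: sum_distrib_right)
qed

definition t_admissible :: "real \<Rightarrow> bool" where
  "t_admissible l \<longleftrightarrow> (\<forall>xs x. (\<forall>n. xs n \<in> C) \<longrightarrow> integrable M x \<longrightarrow>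
        (AE w in M. (\<lambda>n. xs n w) \<longlonglongrightarrow> x w) \<longrightarrow>
        (INF c\<in>C. limsup (\<lambda>n. ereal (L1norm M (\<lambda>w. c w - xs n w))))
          \<le> ereal l * limsup (\<lambda>n. ereal (L1norm M (\<lambda>w. x w - xs n w))))"

lemma t_const_eq: "t_const M C = Inf {ereal l | l. l \<ge> 0 \<and> t_admissible l}"
  unfolding t_const_def t_admissible_def ..

lemma approx_fixed_seq_center:
  assumes l: "t_admissible l" and xs: "approx_fixed_seq xs x R" and r: "l * R < r"
  obtains c where "c \<in> C" "L1norm M (\<lambda>w. x w - c w) + R < r"
proof -
  have "limsup (\<lambda>n. ereal (L1norm M (\<lambda>w. c w - xs n w))) = ereal (L1norm M (\<lambda>w. x w - c w) + R)"
    if "c \<in> C" for c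
    using approx_fixed_seq_dist_tendsto[OF xs mem_integrable[OF that]]
    by (intro lim_imp_Limsup) (auto simp: L1norm_diff_commute[of M c])
  moreover have "limsup (\<lambda>n. ereal (L1norm M (\<lambda>w. x w - xs n w))) = ereal R"
    using xs unfolding approx_fixed_seq_def
    by (intro lim_imp_Limsup) (auto simp: L1norm_diff_commute[of M x])
  moreover have "(INF c\<in>C. limsup (\<lambda>n. ereal (L1norm M (\<lambda>w. c w - xs n w))))
      \<le> ereal l * limsup (\<lambda>n. ereal (L1norm M (\<lambda>w. x w - xs n w)))"
    using l xs unfolding t_admissible_def approx_fixed_seq_def by blast
  ultimately have "(INF c\<in>C. ereal (L1norm M (\<lambda>w. x w - c w) + R)) \<le> ereal (l * R)"
    by (simp cong: INF_cong)
  also have "\<dots> < ereal r" using r by simp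
  finally have "(INF c\<in>C. ereal (L1norm M (\<lambda>w. x w - c w) + R)) < ereal r" .
  then show ?thesis using that by (auto simp: INF_less_iff)
qed

lemma approx_fixed_seq_contraction:
  assumes l: "0 \<le> l" "t_admissible l" and s: "0 < s" "s * l < 2"
    and freq: "\<forall>N. \<exists>m\<ge>N. 1 \<le> m \<and> (\<Sum>j=1..m. lip_const M C (T^^j)) / real m < s"
    and xs: "approx_fixed_seq xs x R" and R: "0 < R"
  obtains xs' x' R' where "approx_fixed_seq xs' x' R'" "L1norm M (\<lambda>w. x' w - x w) + R' \<le> s * l / 2 * R"
proof -
  define \<delta> where "\<delta> = (2 - s * l) / (2 * s)"
  have "0 < \<delta>" and s\<delta>: "s * (l + \<delta>) = s * l / 2 + 1" unfolding \<delta>_def using s by (auto simp: field_simps)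
  then have "l * R < (l + \<delta>) * R" using R by (simp add: distrib_right)
  then obtain c where c: "c \<in> C" "L1norm M (\<lambda>w. x w - c w) + R < (l + \<delta>) * R"
    using approx_fixed_seq_center[OF l(2) xs] by blast
  have "\<forall>k. \<exists>m. Suc k \<le> m \<and> 1 \<le> m \<and> (\<Sum>j=1..m. lip_const M C (T^^j)) / real m < s"
    using freq by blast
  then obtain m where m: "\<And>k. Suc k \<le> m k" "\<And>k. 1 \<le> m k"
    "\<And>k. (\<Sum>j=1..m k. lip_const M C (T^^j)) / real (m k) < s"
    by (metis (no_types))
  obtain D where D: "D \<ge> 0" "\<forall>x\<in>C. \<forall>y\<in>C. L1norm M (\<lambda>w. x w - y w) \<le> D"
    using diameter_bounded by blast
  define v where "v k = cesaro_mean c (m k)" for k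
  have vC: "v k \<in> C" for k unfolding v_def using cesaro_mean_mem[OF c(1) m(2)] .
  have v_approx: "L1norm M (\<lambda>w. T (v k) w - v k w) \<le> D / real (Suc k)" for k
  proof -
    have "L1norm M (\<lambda>w. T (v k) w - v k w) \<le> D / real (m k)"
      unfolding v_def by (rule L1norm_map_cesaro_mean_diff_le[OF c(1) m(2) D(2)])
    also have "\<dots> \<le> D / real (Suc k)" using m(1)[of k] D(1) by (intro divide_left_mono) auto
    finally show ?thesis .
  qed
  have v_dist: "L1norm M (\<lambda>w. v k w - x w) \<le> s * l / 2 * R" for k
  proof -
    have "L1norm M (\<lambda>w. x w - v k w) + R
        \<le> (\<Sum>j=1..m k. lip_const M C (T^^j)) / real (m k) * (L1norm M (\<lambda>w. x w - c w) + R)"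
      unfolding v_def by (rule approx_fixed_seq_cesaro_dist_le[OF xs c(1) m(2)])
    also have "\<dots> \<le> s * ((l + \<delta>) * R)"
      using m(3)[of k] c(2) s(1) L1norm_nonneg[of M "\<lambda>w. x w - c w"] R
      by (intro mult_mono) auto
    also have "\<dots> = (s * l / 2 + 1) * R" using s\<delta> by (simp add: mult.assoc[symmetric])
    finally show ?thesis by (simp add: L1norm_diff_commute[of M x] algebra_simps)
  qed
  have "integrable M x" using xs unfolding approx_fixed_seq_def by blast
  with approx_fixed_seq_of_approx_fixed[OF vC v_approx _ v_dist] that show ?thesis by blast
qed

lemma contraction_parameters:
  assumes hyp: "S_const M C T < 2 / t_const M C" and lip: "\<forall>k. 0 \<le> lip_const M C (T^^k)"
  obtains s l where "0 < s" "0 \<le> l" "t_admissible l" "s * l < 2"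
    "\<forall>N. \<exists>m\<ge>N. 1 \<le> m \<and> (\<Sum>j=1..m. lip_const M C (T^^j)) / real m < s"
proof -
  have "0 \<le> S_const M C T"
    unfolding S_const_def using lip by (intro Liminf_bounded always_eventually allI) (simp add: sum_nonneg)
  moreover have "0 \<le> t_const M C" unfolding t_const_eq by (intro Inf_greatest) auto
  ultimately obtain s where s: "0 < s" "S_const M C T < ereal s" "t_const M C < ereal (2 / s)"
    using hyp by (rule ereal_between_two_div)
  then obtain l where l: "0 \<le> l" "t_admissible l" "l < 2 / s"
    unfolding t_const_eq Inf_less_iff by auto
  then have "s * l < 2" using s(1) by (simp add: field_simps)
  moreover have "\<exists>m\<ge>N. 1 \<le> m \<and> (\<Sum>j=1..m. lip_const M C (T^^j)) / real m < s" for N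
  proof -
    obtain m where "m > N" "ereal ((\<Sum>j=1..m. lip_const M C (T^^j)) / real m) < ereal s"
      using frequently_less_of_liminf_less[OF s(2)[unfolded S_const_def], of N] by blast
    then show ?thesis by (intro exI[of _ m]) auto
  qed
  ultimately show ?thesis using s(1) l by (intro that) auto
qed

lemma fixed_point_of_approx_fixed_seqs:
  assumes seq: "\<And>k. approx_fixed_seq (XS k) (X k) (RR k)" and RR: "RR \<longlonglongrightarrow> 0"
    and z: "integrable M z" "(\<lambda>k. L1norm M (\<lambda>w. z w - X k w)) \<longlonglongrightarrow> 0"
  shows "z \<in> C \<and> (AE w in M. T z w = z w)"
proof -
  have "\<exists>n. L1norm M (\<lambda>w. XS j n w - X j w) < RR j + 1 / Suc j \<and>
      L1norm M (\<lambda>w. T (XS j n) w - XS j n w) < 1 / Suc j" for j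
  proof -
    have "eventually (\<lambda>n. L1norm M (\<lambda>w. XS j n w - X j w) < RR j + 1 / Suc j) sequentially"
      "eventually (\<lambda>n. L1norm M (\<lambda>w. T (XS j n) w - XS j n w) < 1 / Suc j) sequentially"
      using seq[of j] unfolding approx_fixed_seq_def by (auto intro: order_tendstoD)
    from eventually_conj[OF this] show ?thesis by (auto simp: eventually_sequentially)
  qed
  then obtain n where "\<forall>j. L1norm M (\<lambda>w. XS j (n j) w - X j w) < RR j + 1 / Suc j \<and>
      L1norm M (\<lambda>w. T (XS j (n j)) w - XS j (n j) w) < 1 / Suc j"
    using choice[of "\<lambda>j n. L1norm M (\<lambda>w. XS j n w - X j w) < RR j + 1 / Suc j \<and>
      L1norm M (\<lambda>w. T (XS j n) w - XS j n w) < 1 / Suc j"] by blast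
  then have n: "\<And>j. L1norm M (\<lambda>w. XS j (n j) w - X j w) < RR j + 1 / Suc j"
    "\<And>j. L1norm M (\<lambda>w. T (XS j (n j)) w - XS j (n j) w) < 1 / Suc j"
    by auto
  define y where "y j = XS j (n j)" for j
  have yC: "y j \<in> C" for j using seq[of j] unfolding y_def approx_fixed_seq_def by blast
  have lim_inv: "(\<lambda>j. 1 / real (Suc j)) \<longlonglongrightarrow> 0"
    using LIMSEQ_inverse_real_of_nat by (simp add: inverse_eq_divide)
  have y_z: "L1norm M (\<lambda>w. y j w - z w) \<le> RR j + 1 / Suc j + L1norm M (\<lambda>w. z w - X j w)" for j
  proof -
    have "X j \<in> borel_measurable M" "integrable M (X j)"
      using seq[of j] unfolding approx_fixed_seq_def by auto
    then have "L1norm M (\<lambda>w. y j w - z w) \<le> L1norm M (\<lambda>w. y j w - X j w) + L1norm M (\<lambda>w. z w - X j w)"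
      using L1norm_triangle[of M "y j" "X j" z] yC mem_integrable z(1) L1norm_diff_commute[of M "X j" z]
      by simp
    then show ?thesis using n(1)[of j] unfolding y_def by simp
  qed
  have "(\<lambda>j. RR j + 1 / Suc j + L1norm M (\<lambda>w. z w - X j w)) \<longlonglongrightarrow> 0 + 0 + 0"
    using RR lim_inv z(2) by (intro tendsto_add)
  then have bound_lim: "(\<lambda>j. RR j + 1 / Suc j + L1norm M (\<lambda>w. z w - X j w)) \<longlonglongrightarrow> 0" by simp
  have "(\<lambda>j. L1norm M (\<lambda>w. y j w - z w)) \<longlonglongrightarrow> 0"
    using y_z by (intro tendsto_sandwich[OF _ _ tendsto_const bound_lim] always_eventually allI L1norm_nonneg)
  moreover have "(\<lambda>j. L1norm M (\<lambda>w. T (y j) w - y j w)) \<longlonglongrightarrow> 0"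
    using n(2) unfolding y_def
    by (intro tendsto_sandwich[OF _ _ tendsto_const lim_inv] always_eventually allI L1norm_nonneg less_imp_le)
  ultimately show ?thesis by (rule fixed_point_of_approx_fixed_limit[where y=y, OF yC z(1)])
qed

lemma fixed_point_of_contraction_chain:
  assumes \<theta>: "0 \<le> \<theta>" "\<theta> < 1" and seq: "\<And>k. approx_fixed_seq (XS k) (X k) (RR k)"
    and step: "\<And>k. L1norm M (\<lambda>w. X (Suc k) w - X k w) + RR (Suc k) \<le> \<theta> * RR k"
  shows "\<exists>z\<in>C. AE w in M. T z w = z w"
proof -
  have RR_nonneg: "0 \<le> RR k" for k using approx_fixed_seq_radius_nonneg[OF seq] .
  have X_int: "integrable M (X k)" for k using seq[of k] unfolding approx_fixed_seq_def by blast
  have RR_le: "RR k \<le> RR 0 * \<theta>^k" for k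
  proof (induction k)
    case (Suc k)
    have "RR (Suc k) \<le> \<theta> * RR k" using step[of k] L1norm_nonneg[of M "\<lambda>w. X (Suc k) w - X k w"] by simp
    also have "\<dots> \<le> \<theta> * (RR 0 * \<theta>^k)" using Suc \<theta> by (intro mult_left_mono) auto
    finally show ?case by (simp add: algebra_simps)
  qed simp
  have X_step: "L1norm M (\<lambda>w. X (Suc k) w - X k w) \<le> RR 0 * \<theta>^k" for k
  proof -
    have "L1norm M (\<lambda>w. X (Suc k) w - X k w) \<le> \<theta> * RR k" using step[of k] RR_nonneg[of "Suc k"] by simp
    also have "\<dots> \<le> 1 * (RR 0 * \<theta>^k)" using RR_le[of k] RR_nonneg[of k] \<theta> by (intro mult_mono) auto
    finally show ?thesis by simp
  qed
  have X_tail: "L1norm M (\<lambda>w. X j w - X k w) \<le> RR 0 * \<theta>^k / (1 - \<theta>)" if "k \<le> j" for k j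
    by (rule L1norm_diff_le_geometric[where X=X, OF X_int \<theta> X_step that])
  have \<theta>_pow: "(\<lambda>k. RR 0 * \<theta>^k) \<longlonglongrightarrow> 0"
    using tendsto_mult_left[OF LIMSEQ_power_zero, of \<theta> "RR 0"] \<theta> by simp
  then have "(\<lambda>k. RR 0 * \<theta>^k / (1 - \<theta>)) \<longlonglongrightarrow> 0"
    using tendsto_divide[OF \<theta>_pow tendsto_const, of "1 - \<theta>"] \<theta> by simp
  then obtain z where z: "integrable M z" "\<And>k. L1norm M (\<lambda>w. z w - X k w) \<le> RR 0 * \<theta>^k / (1 - \<theta>)"
    using L1_Cauchy_AE_limit[where X=X, OF X_int _ X_tail] by auto
  moreover have "(\<lambda>k. L1norm M (\<lambda>w. z w - X k w)) \<longlonglongrightarrow> 0"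
    using z(2) by (intro tendsto_sandwich[OF _ _ tendsto_const \<open>(\<lambda>k. RR 0 * \<theta>^k / (1 - \<theta>)) \<longlonglongrightarrow> 0\<close>]
        always_eventually allI L1norm_nonneg)
  moreover have "RR \<longlonglongrightarrow> 0"
    using RR_le by (intro tendsto_sandwich[OF _ _ tendsto_const \<theta>_pow] always_eventually allI RR_nonneg)
  ultimately show ?thesis
    using fixed_point_of_approx_fixed_seqs[where XS=XS and X=X and RR=RR, OF seq] by blast
qed

lemma approx_fixed_seq_exists: "\<exists>xs x R. approx_fixed_seq xs x R"
proof -
  obtain c where c: "c \<in> C" using nonempty by blast
  obtain B where B: "\<forall>x\<in>C. L1norm M x \<le> B" using L1norm_bounded by blast
  obtain D where D: "\<forall>x\<in>C. \<forall>y\<in>C. L1norm M (\<lambda>w. x w - y w) \<le> D" using diameter_bounded by blast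
  have "cesaro_mean c (Suc k) \<in> C" for k using cesaro_mean_mem[OF c] by simp
  moreover have "L1norm M (\<lambda>w. T (cesaro_mean c (Suc k)) w - cesaro_mean c (Suc k) w) \<le> D / real (Suc k)" for k
    by (rule L1norm_map_cesaro_mean_diff_le[OF c _ D]) simp
  moreover have "L1norm M (\<lambda>w. cesaro_mean c (Suc k) w - 0) \<le> B" for k
    using B calculation(1) by simp
  ultimately show ?thesis
    using approx_fixed_seq_of_approx_fixed[of "\<lambda>k. cesaro_mean c (Suc k)" D "\<lambda>w. 0" B] by blast
qed

lemma contraction_chain:
  assumes step: "\<And>xs x R. approx_fixed_seq xs x R \<Longrightarrow>
      \<exists>xs' x' R'. approx_fixed_seq xs' x' R' \<and> L1norm M (\<lambda>w. x' w - x w) + R' \<le> \<theta> * R"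
  obtains XS X RR where "\<And>k. approx_fixed_seq (XS k) (X k) (RR k)"
    "\<And>k. L1norm M (\<lambda>w. X (Suc k) w - X k w) + RR (Suc k) \<le> \<theta> * RR k"
proof -
  have "\<exists>f. \<forall>k. approx_fixed_seq (fst (f k)) (fst (snd (f k))) (snd (snd (f k))) \<and>
      L1norm M (\<lambda>w. fst (snd (f (Suc k))) w - fst (snd (f k)) w) + snd (snd (f (Suc k)))
        \<le> \<theta> * snd (snd (f k))"
  proof (rule dependent_nat_choice)
    show "\<exists>p. approx_fixed_seq (fst p) (fst (snd p)) (snd (snd p))"
      using approx_fixed_seq_exists by auto
  next
    fix p :: "(nat \<Rightarrow> 'a \<Rightarrow> real) \<times> ('a \<Rightarrow> real) \<times> real"
    assume "approx_fixed_seq (fst p) (fst (snd p)) (snd (snd p))"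
    from step[OF this] show "\<exists>q. approx_fixed_seq (fst q) (fst (snd q)) (snd (snd q)) \<and>
        L1norm M (\<lambda>w. fst (snd q) w - fst (snd p) w) + snd (snd q) \<le> \<theta> * snd (snd p)"
      by fastforce
  qed
  then obtain f where "\<And>k. approx_fixed_seq (fst (f k)) (fst (snd (f k))) (snd (snd (f k)))"
    "\<And>k. L1norm M (\<lambda>w. fst (snd (f (Suc k))) w - fst (snd (f k)) w) + snd (snd (f (Suc k)))
        \<le> \<theta> * snd (snd (f k))"
    by blast
  then show ?thesis by (rule that)
qed

theorem fixed_point_exists:
  assumes hyp: "S_const M C T < 2 / t_const M C"
  shows "\<exists>x\<in>C. AE w in M. T x w = x w"
proof (rule ccontr)
  assume no_fixed: "\<not> (\<exists>x\<in>C. AE w in M. T x w = x w)"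
  \<comment> \<open>otherwise \<open>lip_const\<close> is the supremum of the empty set, but every point is fixed\<close>
  have "\<exists>x\<in>C. \<exists>y\<in>C. L1norm M (\<lambda>w. x w - y w) \<noteq> 0"
  proof (rule ccontr)
    assume "\<not> ?thesis"
    moreover obtain x where "x \<in> C" using nonempty by blast
    ultimately have "AE w in M. T x w - x w = 0"
      using map_mem by (intro AE_eq_0_if_L1norm_eq_0 diff_integrable) auto
    with \<open>x \<in> C\<close> no_fixed show False by auto
  qed
  then have "\<forall>k. 0 \<le> lip_const M C (T^^k)" using lip_const_nonneg by blast
  with hyp obtain s l where s: "0 < s" "s * l < 2" and l: "0 \<le> l" "t_admissible l"
    and freq: "\<forall>N. \<exists>m\<ge>N. 1 \<le> m \<and> (\<Sum>j=1..m. lip_const M C (T^^j)) / real m < s"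
    by (rule contraction_parameters)
  have R_pos: "0 < R" if seq: "approx_fixed_seq xs x R" for xs x R
  proof -
    have "R \<noteq> 0"
    proof
      assume "R = 0"
      with seq have "x \<in> C \<and> (AE w in M. T x w = x w)"
        unfolding approx_fixed_seq_def by (intro fixed_point_of_approx_fixed_limit) auto
      with no_fixed show False by blast
    qed
    with approx_fixed_seq_radius_nonneg[OF seq] show ?thesis by simp
  qed
  have "\<exists>xs' x' R'. approx_fixed_seq xs' x' R' \<and> L1norm M (\<lambda>w. x' w - x w) + R' \<le> s * l / 2 * R"
    if "approx_fixed_seq xs x R" for xs x R
    using approx_fixed_seq_contraction[OF l s(1,2) freq that R_pos[OF that]] by blast
  then obtain XS X RR where chain: "\<And>k. approx_fixed_seq (XS k) (X k) (RR k)"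
    "\<And>k. L1norm M (\<lambda>w. X (Suc k) w - X k w) + RR (Suc k) \<le> s * l / 2 * RR k"
    using contraction_chain[of "s * l / 2"] by blast
  have "0 \<le> s * l / 2" "s * l / 2 < 1" using s l by auto
  from fixed_point_of_contraction_chain[where XS=XS and X=X and RR=RR, OF this chain] no_fixed
  show False by blast
qed

end

theorem mainTheorem3:
  fixes M :: "'a measure" and C :: "('a \<Rightarrow> real) set"
    and T :: "('a \<Rightarrow> real) \<Rightarrow> ('a \<Rightarrow> real)"
  assumes "sigma_finite_measure M"
    and "L1_subset M C" and "C \<noteq> {}"
    and "L1_closed M C" and "L1_convex C" and "L1_bounded M C"
    and "\<forall>x\<in>C. T x \<in> C"
    and "L1_affine M C T" and "L1_lipschitzian M C T"
    and "S_const M C T < 2 / t_const M C"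
  shows "\<exists>x\<in>C. AE w in M. T x w = x w"
proof -
  interpret affine_lipschitz_self_map M C T
    by (rule affine_lipschitz_self_map.intro) fact+
  show ?thesis using fixed_point_exists[OF assms(10)] .
qed

end
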